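(* Let $\epsilon=(\epsilon_n)\in(0,1]^{\mathbb{N}}$ and $\omega\in\beta\mathbb{N}$. The complete residue field $\mathscr{H}(\omega)$ is algebraically closed and spherically complete, and $|\mathscr{H}(\omega)|=\mathbb{R}_+$. Moreover: (1) if $e=\lim_\omega\epsilon_n>0$, then $\mathscr{H}(\omega)$ is isometric to $(\mathbb{C},|\cdot|^e)$, hence is an Archimedean metrized field; (2) if $\lim_\omega\epsilon_n=0$, then $\mathscr{H}(\omega)$ is a non-Archimedean metrized field.
   Context: $A^\epsilon=\{(x_n)\in\mathbb{C}^{\mathbb{N}}:\sup_n|x_n|^{\epsilon_n}<\infty\}$ with norm $\|x\|=\sup_n|x_n|^{\epsilon_n}$ ($|\cdot|$ the Euclidean norm). $\beta\mathbb{N}$ is the set of ultrafilters on $\mathbb{N}$; for $\omega\in\beta\mathbb{N}$, $\lim_\omega$ denotes the limit along $\omega$. Each $\omega$ defines the bounded multiplicative seminorm $|x|_\omega=\lim_\omega|x_n|^{\epsilon_n}$ on $A^\epsilon$, with kernel $\ker(\omega)=\{x:\lim_\omega|x_n|^{\epsilon_n}=0\}$; $\mathscr{H}(\omega)$ is the completion of the fraction field of $A^\epsilon/\ker(\omega)$ for the induced norm. A metrized field is spherically complete if every decreasing sequence of closed balls has nonempty intersection. *)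

theory Defs
  imports "HOL-Analysis.Analysis" "HOL-Algebra.Algebraic_Closure"
begin

type_synonym cseq = "nat \<Rightarrow> complex"
type_synonym frac = "cseq \<times> cseq"   \<comment> \<open>a pair (a,b) stands for the fraction a/b\<close>

definition Aeps :: "(nat \<Rightarrow> real) \<Rightarrow> cseq set" where
  "Aeps eps = {x. bdd_above (range (\<lambda>n. cmod (x n) powr eps n))}"

text \<open>Ultrafilters on nat (the points of beta N), as filters.\<close>

definition is_ultrafilter :: "nat filter \<Rightarrow> bool" where
  "is_ultrafilter F \<longleftrightarrow> F \<noteq> bot \<and> (\<forall>P. eventually P F \<or> eventually (\<lambda>n. \<not> P n) F)"

definition omega_sn :: "(nat \<Rightarrow> real) \<Rightarrow> nat filter \<Rightarrow> cseq \<Rightarrow> real" where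
  "omega_sn eps w x = Lim w (\<lambda>n. cmod (x n) powr eps n)"

definition omega_ker :: "(nat \<Rightarrow> real) \<Rightarrow> nat filter \<Rightarrow> cseq set" where
  "omega_ker eps w = {x \<in> Aeps eps. omega_sn eps w x = 0}"

text \<open>Fractions a/b with a, b in A^eps and b not in ker(omega), with the induced norm.
  (Fractions are identified later, inside the completion, via distance zero.)\<close>

definition fracs :: "(nat \<Rightarrow> real) \<Rightarrow> nat filter \<Rightarrow> frac set" where
  "fracs eps w = {(a, b). a \<in> Aeps eps \<and> b \<in> Aeps eps \<and> b \<notin> omega_ker eps w}"

definition fadd :: "frac \<Rightarrow> frac \<Rightarrow> frac" where
  "fadd p q = (\<lambda>n. fst p n * snd q n + fst q n * snd p n, \<lambda>n. snd p n * snd q n)"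

definition fmul :: "frac \<Rightarrow> frac \<Rightarrow> frac" where
  "fmul p q = (\<lambda>n. fst p n * fst q n, \<lambda>n. snd p n * snd q n)"

definition fneg :: "frac \<Rightarrow> frac" where
  "fneg p = (\<lambda>n. - fst p n, snd p)"

definition fnorm :: "(nat \<Rightarrow> real) \<Rightarrow> nat filter \<Rightarrow> frac \<Rightarrow> real" where
  "fnorm eps w p = omega_sn eps w (fst p) / omega_sn eps w (snd p)"

definition fdist :: "(nat \<Rightarrow> real) \<Rightarrow> nat filter \<Rightarrow> frac \<Rightarrow> frac \<Rightarrow> real" where
  "fdist eps w p q = fnorm eps w (fadd p (fneg q))"

definition hcauchy :: "(nat \<Rightarrow> real) \<Rightarrow> nat filter \<Rightarrow> (nat \<Rightarrow> frac) \<Rightarrow> bool" where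
  "hcauchy eps w s \<longleftrightarrow> (\<forall>k. s k \<in> fracs eps w) \<and>
     (\<forall>d>0. \<exists>N. \<forall>m\<ge>N. \<forall>n\<ge>N. fdist eps w (s m) (s n) < d)"

definition hclass :: "(nat \<Rightarrow> real) \<Rightarrow> nat filter \<Rightarrow> (nat \<Rightarrow> frac) \<Rightarrow> (nat \<Rightarrow> frac) set" where
  "hclass eps w s = {t. hcauchy eps w t \<and> (\<lambda>k. fdist eps w (s k) (t k)) \<longlonglongrightarrow> 0}"

definition hrep :: "(nat \<Rightarrow> frac) set \<Rightarrow> nat \<Rightarrow> frac" where
  "hrep U = (SOME s. s \<in> U)"

definition Hcarrier :: "(nat \<Rightarrow> real) \<Rightarrow> nat filter \<Rightarrow> (nat \<Rightarrow> frac) set set" where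
  "Hcarrier eps w = {hclass eps w s | s. hcauchy eps w s}"

definition H :: "(nat \<Rightarrow> real) \<Rightarrow> nat filter \<Rightarrow> (nat \<Rightarrow> frac) set ring" where
  "H eps w = \<lparr>carrier = Hcarrier eps w,
      mult = (\<lambda>U V. hclass eps w (\<lambda>k. fmul (hrep U k) (hrep V k))),
      one = hclass eps w (\<lambda>k. (\<lambda>n. 1, \<lambda>n. 1)),
      zero = hclass eps w (\<lambda>k. (\<lambda>n. 0, \<lambda>n. 1)),
      add = (\<lambda>U V. hclass eps w (\<lambda>k. fadd (hrep U k) (hrep V k)))\<rparr>"

definition Hnorm :: "(nat \<Rightarrow> real) \<Rightarrow> nat filter \<Rightarrow> (nat \<Rightarrow> frac) set \<Rightarrow> real" where
  "Hnorm eps w U = lim (\<lambda>k. fnorm eps w (hrep U k))"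

definition metrized_field :: "('a, 'b) ring_scheme \<Rightarrow> ('a \<Rightarrow> real) \<Rightarrow> bool" where
  "metrized_field R N \<longleftrightarrow> field R \<and>
     (\<forall>x\<in>carrier R. 0 \<le> N x \<and> (N x = 0 \<longleftrightarrow> x = \<zero>\<^bsub>R\<^esub>)) \<and>
     (\<forall>x\<in>carrier R. \<forall>y\<in>carrier R. N (x \<otimes>\<^bsub>R\<^esub> y) = N x * N y) \<and>
     (\<forall>x\<in>carrier R. \<forall>y\<in>carrier R. N (x \<oplus>\<^bsub>R\<^esub> y) \<le> N x + N y)"

definition non_archimedean :: "('a, 'b) ring_scheme \<Rightarrow> ('a \<Rightarrow> real) \<Rightarrow> bool" where
  "non_archimedean R N \<longleftrightarrow>
     (\<forall>x\<in>carrier R. \<forall>y\<in>carrier R. N (x \<oplus>\<^bsub>R\<^esub> y) \<le> max (N x) (N y))"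

definition closed_ball_in :: "('a, 'b) ring_scheme \<Rightarrow> ('a \<Rightarrow> real) \<Rightarrow> 'a \<Rightarrow> real \<Rightarrow> 'a set" where
  "closed_ball_in R N c r = {y \<in> carrier R. N (y \<ominus>\<^bsub>R\<^esub> c) \<le> r}"

definition spherically_complete :: "('a, 'b) ring_scheme \<Rightarrow> ('a \<Rightarrow> real) \<Rightarrow> bool" where
  "spherically_complete R N \<longleftrightarrow>
     (\<forall>c r. (\<forall>n. c n \<in> carrier R \<and> 0 \<le> r n) \<and>
        (\<forall>n. closed_ball_in R N (c (Suc n)) (r (Suc n)) \<subseteq> closed_ball_in R N (c n) (r n))
        \<longrightarrow> (\<Inter>n. closed_ball_in R N (c n) (r n)) \<noteq> {})"

definition C_ring :: "complex ring" where
  "C_ring = \<lparr>carrier = UNIV, mult = (*), one = 1, zero = 0, add = (+)\<rparr>"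

end

theory Submission
  imports Defs "HOL-Computational_Algebra.Fundamental_Theorem_Algebra"
begin

(* A sequence b with |b|_omega > 0 is omega-eventually bounded away from 0, so every fraction a/b
   agrees omega-eventually with a sequence of A^eps. A diagonal argument along the ultrafilter
   shows that A^eps is spherically complete, hence complete, for |.|_omega; so H(omega) is the
   quotient of A^eps by ker(omega), and its field operations, norm and closed balls are computed
   on representatives. For algebraic closure pick a complex root of the n-th coordinate
   polynomial for every n: Cauchy's root bound and the subadditivity of t \<mapsto> t^(eps_n) keep
   these roots in A^eps. If eps_n \<rightarrow> e > 0 along omega, the omega-limit of a representative
   is an isomorphism onto C with |x|_omega = |lim x|^e; if eps_n \<rightarrow> 0, the estimate
   |a + b|^(eps_n) \<le> 2^(eps_n) max(|a|, |b|)^(eps_n) becomes the ultrametric inequality in the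
   limit. *)

lemma ultrafilter_tendsto_compact:
  fixes f :: "nat \<Rightarrow> 'a::topological_space"
  assumes u: "is_ultrafilter w" and K: "compact K" and ev: "eventually (\<lambda>n. f n \<in> K) w"
  shows "\<exists>l\<in>K. (f \<longlongrightarrow> l) w"
proof (rule ccontr)
  assume nc: "\<not> (\<exists>l\<in>K. (f \<longlongrightarrow> l) w)"
  have "\<forall>l\<in>K. \<exists>S. open S \<and> l \<in> S \<and> eventually (\<lambda>n. f n \<notin> S) w"
  proof
    fix l assume "l \<in> K"
    with nc have "\<not> (f \<longlongrightarrow> l) w" by blast
    then obtain S where "open S" "l \<in> S" "\<not> eventually (\<lambda>n. f n \<in> S) w"
      unfolding tendsto_def by blast
    with u show "\<exists>S. open S \<and> l \<in> S \<and> eventually (\<lambda>n. f n \<notin> S) w"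
      unfolding is_ultrafilter_def by blast
  qed
  then obtain S where S: "\<And>l. l \<in> K \<Longrightarrow> open (S l) \<and> l \<in> S l \<and> eventually (\<lambda>n. f n \<notin> S l) w"
    by metis
  have "K \<subseteq> (\<Union>l\<in>K. S l)" using S by blast
  then obtain C where C: "C \<subseteq> K" "finite C" "K \<subseteq> (\<Union>l\<in>C. S l)"
    using compactE_image[OF K, of K S] S by blast
  have "eventually (\<lambda>n. \<forall>l\<in>C. f n \<notin> S l) w"
    using C S by (intro eventually_ball_finite) auto
  with ev have "eventually (\<lambda>n. False) w"
    by eventually_elim (use C in blast)
  with u show False unfolding is_ultrafilter_def by (simp add: eventually_False)
qed

lemma ultrafilter_principal_or_le_sequentially:
  assumes "is_ultrafilter w"
  shows "(\<exists>j. eventually (\<lambda>n. n = j) w) \<or> w \<le> sequentially"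
proof (cases "\<exists>j. eventually (\<lambda>n. n = j) w")
  case False
  then have "eventually (\<lambda>n. n \<noteq> j) w" for j
    using assms unfolding is_ultrafilter_def by blast
  then have avoid: "eventually (\<lambda>n. \<forall>j\<in>{..<N}. n \<noteq> j) w" for N
    by (intro eventually_ball_finite) auto
  have "w \<le> sequentially"
    unfolding le_sequentially
  proof
    fix N
    show "eventually (\<lambda>n. N \<le> n) w"
      using avoid[of N] by eventually_elim (metis lessThan_iff not_le)
  qed
  then show ?thesis by blast
qed simp

lemma diagonal_index_eventually:
  fixes F :: "nat filter" and P :: "nat \<Rightarrow> nat \<Rightarrow> bool"
  assumes F: "F \<le> sequentially" and P: "\<And>k. eventually (P k) F" and P0: "\<And>n. P 0 n"
  shows "\<exists>\<kappa>. (\<forall>n. P (\<kappa> n) n) \<and> (\<forall>m. eventually (\<lambda>n. m \<le> \<kappa> n) F)"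
proof -
  define K where "K n = {k. k \<le> n \<and> P k n}" for n
  have K: "finite (K n)" "K n \<noteq> {}" for n using P0 by (auto simp: K_def)
  have "P (Max (K n)) n" for n using Max_in[OF K] by (simp add: K_def)
  moreover have "eventually (\<lambda>n. m \<le> Max (K n)) F" for m
  proof -
    have "eventually (\<lambda>n. m \<le> n \<and> P m n) F"
      using F P unfolding le_sequentially by (auto intro: eventually_conj)
    then show ?thesis by (rule eventually_mono) (auto intro: Max_ge[OF K(1)] simp: K_def)
  qed
  ultimately show ?thesis by (intro exI[of _ "\<lambda>n. Max (K n)"]) blast
qed

lemma nested_cballs_common_point:
  fixes z :: "nat \<Rightarrow> 'a::heine_borel"
  assumes nested: "\<And>k m. k \<le> m \<Longrightarrow> dist (z m) (z k) \<le> \<rho> k"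
  shows "\<exists>l. \<forall>k. dist l (z k) \<le> \<rho> k"
proof -
  have "bounded (range z)"
    unfolding bounded_def
  proof (intro exI ballI)
    fix y assume "y \<in> range z"
    then show "dist (z 0) y \<le> \<rho> 0" using nested[of 0] by (auto simp: dist_commute)
  qed
  then obtain l \<sigma> where \<sigma>: "strict_mono \<sigma>" and lim: "(z \<circ> \<sigma>) \<longlonglongrightarrow> l"
    using bounded_imp_convergent_subsequence by blast
  have "dist l (z k) \<le> \<rho> k" for k
  proof (rule tendsto_upperbound)
    show "(\<lambda>m. dist (z (\<sigma> m)) (z k)) \<longlonglongrightarrow> dist l (z k)"
      using lim by (intro tendsto_intros) (simp add: o_def)
    show "eventually (\<lambda>m. dist (z (\<sigma> m)) (z k) \<le> \<rho> k) sequentially"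
      using eventually_ge_at_top[of k]
      by eventually_elim (metis nested seq_suble[OF \<sigma>] le_trans)
  qed simp
  then show ?thesis by blast
qed

lemma LIMSEQ_squeeze_zero:
  fixes f g :: "nat \<Rightarrow> real"
  assumes "\<And>k. 0 \<le> f k" "\<And>k. f k \<le> g k" "g \<longlonglongrightarrow> 0"
  shows "f \<longlonglongrightarrow> 0"
  by (rule tendsto_sandwich[of "\<lambda>_. 0" f sequentially g]) (use assms in auto)

lemma powr_add_le_add_powr:
  fixes a b e :: real
  assumes "0 \<le> a" "0 \<le> b" "0 < e" "e \<le> 1"
  shows "(a + b) powr e \<le> a powr e + b powr e"
proof (cases "a + b = 0")
  case True
  then show ?thesis using assms by simp
next
  case False
  then have s: "0 < a + b" using assms by auto
  have le_powr: "t \<le> t powr e" if "0 \<le> t" "t \<le> 1" for t :: real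
  proof -
    have "t powr 1 \<le> t powr e" using that assms by (intro powr_mono') auto
    then show ?thesis using that by simp
  qed
  have "1 = a / (a + b) + b / (a + b)"
    using s by (simp add: add_divide_distrib[symmetric])
  also have "\<dots> \<le> (a / (a + b)) powr e + (b / (a + b)) powr e"
    using assms s by (intro add_mono le_powr) auto
  also have "\<dots> = (a powr e + b powr e) / (a + b) powr e"
    using assms by (simp add: powr_divide add_divide_distrib)
  finally show ?thesis
    using s by (simp add: divide_simps)
qed

lemma powr_sum_list_le:
  fixes e :: real
  assumes "\<forall>x\<in>set xs. 0 \<le> x" "0 < e" "e \<le> 1"
  shows "sum_list xs powr e \<le> sum_list (map (\<lambda>x. x powr e) xs)"
  using assms(1)
proof (induction xs)
  case (Cons x xs)
  have "(x + sum_list xs) powr e \<le> x powr e + sum_list xs powr e"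
    using Cons.prems assms by (intro powr_add_le_add_powr sum_list_nonneg) auto
  then show ?case using Cons by simp
qed simp

lemma le_powr_inverse_of_powr_le:
  fixes a r e :: real
  assumes "0 \<le> a" "0 < e" "a powr e \<le> r"
  shows "a \<le> r powr (1 / e)"
proof -
  have "a = (a powr e) powr (1 / e)" using assms by (simp add: powr_powr)
  also have "\<dots> \<le> r powr (1 / e)" using assms by (intro powr_mono2) auto
  finally show ?thesis .
qed

(* Coefficients are listed leading one first, the convention of HOL-Algebra's eval. *)
fun eval_desc :: "complex list \<Rightarrow> complex \<Rightarrow> complex" where
  "eval_desc [] z = 0"
| "eval_desc (c # cs) z = c * z ^ length cs + eval_desc cs z"

lemma poly_Poly_rev: "poly (Poly (rev cs)) z = eval_desc cs z"
  by (induction cs) (simp_all add: Poly_append poly_monom algebra_simps)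

lemma eval_desc_has_root:
  assumes "c \<noteq> 0" "cs \<noteq> []"
  shows "\<exists>z. eval_desc (c # cs) z = 0"
proof -
  define p where "p = Poly (rev (c # cs))"
  have "Polynomial.coeff p (length cs) = c"
    by (simp add: p_def nth_default_def nth_append)
  then have "length cs \<le> Polynomial.degree p"
    using assms(1) by (intro le_degree) simp
  then have "Polynomial.degree p \<noteq> 0"
    using assms(2) by (cases cs) auto
  then have "\<not> constant (poly p)"
    using constant_degree[of p] by simp
  then obtain z where "poly p z = 0"
    using fundamental_theorem_of_algebra by blast
  then show ?thesis by (metis p_def poly_Poly_rev)
qed

lemma norm_eval_desc_le:
  assumes "1 \<le> cmod z"
  shows "cmod (eval_desc cs z) \<le> sum_list (map cmod cs) * cmod z ^ (length cs - 1)"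
proof (induction cs)
  case (Cons c cs)
  have "cmod z ^ (length cs - 1) \<le> cmod z ^ length cs"
    using assms by (intro power_increasing) auto
  then have "sum_list (map cmod cs) * cmod z ^ (length cs - 1)
      \<le> sum_list (map cmod cs) * cmod z ^ length cs"
    by (intro mult_left_mono sum_list_nonneg) auto
  moreover have "cmod (eval_desc (c # cs) z) \<le> cmod c * cmod z ^ length cs + cmod (eval_desc cs z)"
    using norm_triangle_ineq[of "c * z ^ length cs"] by (simp add: norm_mult norm_power)
  ultimately show ?case using Cons.IH by (simp add: algebra_simps)
qed simp

lemma eval_desc_root_norm_le:
  assumes root: "eval_desc (c # cs) z = 0" and c: "c \<noteq> 0"
  shows "cmod z \<le> max 1 (sum_list (map cmod cs) / cmod c)"
proof (cases "cmod z \<le> 1")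
  case False
  have "cs \<noteq> []" using root c by auto
  then obtain d where d: "length cs = Suc d" by (cases cs) auto
  have "c * z ^ length cs = - eval_desc cs z" using root by (simp add: eq_neg_iff_add_eq_0)
  then have "cmod c * cmod z ^ length cs = cmod (eval_desc cs z)"
    by (metis norm_minus_cancel norm_mult norm_power)
  then have "(cmod c * cmod z) * cmod z ^ d = cmod (eval_desc cs z)"
    by (simp add: d algebra_simps)
  also have "\<dots> \<le> sum_list (map cmod cs) * cmod z ^ d"
    using norm_eval_desc_le[of z cs] False d by simp
  finally have "(cmod c * cmod z) * cmod z ^ d \<le> sum_list (map cmod cs) * cmod z ^ d" .
  moreover have "0 < cmod z ^ d"
    using False by (intro zero_less_power) linarith
  ultimately have "cmod c * cmod z \<le> sum_list (map cmod cs)"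
    by (rule mult_right_le_imp_le)
  then have "cmod z \<le> sum_list (map cmod cs) / cmod c"
    using c by (simp add: field_simps)
  then show ?thesis by simp
qed simp

lemma eval_desc_root_powr_le:
  assumes root: "eval_desc (c # cs) z = 0" and c: "c \<noteq> 0" and e: "0 < e" "e \<le> 1"
  shows "cmod z powr e \<le> 1 + sum_list (map (\<lambda>q. cmod q powr e) cs) / cmod c powr e"
proof -
  define Q where "Q = sum_list (map cmod cs) / cmod c"
  have "cmod z powr e \<le> max 1 Q powr e"
    using eval_desc_root_norm_le[OF root c] e by (intro powr_mono2) (auto simp: Q_def)
  also have "\<dots> \<le> 1 + Q powr e"
    by (cases "Q \<le> 1") (auto simp: max_def)
  also have "Q powr e = sum_list (map cmod cs) powr e / cmod c powr e"
    by (simp add: Q_def powr_divide sum_list_nonneg)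
  also have "\<dots> \<le> sum_list (map (\<lambda>q. cmod q powr e) cs) / cmod c powr e"
    using powr_sum_list_le[of "map cmod cs" e] e by (intro divide_right_mono) (auto simp: o_def)
  finally show ?thesis by simp
qed

locale ultra_Aeps =
  fixes eps :: "nat \<Rightarrow> real" and w :: "nat filter"
  assumes eps_pos: "\<And>n. 0 < eps n" and eps_le1: "\<And>n. eps n \<le> 1"
    and ultra: "is_ultrafilter w"
begin

abbreviation A :: "cseq set" where "A \<equiv> Aeps eps"
abbreviation wnorm :: "cseq \<Rightarrow> real" where "wnorm \<equiv> omega_sn eps w"

definition pabs :: "cseq \<Rightarrow> nat \<Rightarrow> real" where "pabs x n = cmod (x n) powr eps n"

lemma pabs_fun: "(\<lambda>n. cmod (x n) powr eps n) = pabs x"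
  by (simp add: pabs_def[abs_def])

lemma wnorm_def': "wnorm x = Lim w (pabs x)"
  by (simp add: omega_sn_def pabs_fun)

lemma pabs_nonneg[simp]: "0 \<le> pabs x n" by (simp add: pabs_def)

lemma w_not_bot: "w \<noteq> bot" using ultra by (simp add: is_ultrafilter_def)

lemma A_iff_bounded: "x \<in> A \<longleftrightarrow> (\<exists>M. \<forall>n. pabs x n \<le> M)"
  by (auto simp add: Aeps_def bdd_above_def pabs_def)

lemma A_boundE:
  assumes "x \<in> A" obtains M where "0 \<le> M" "\<And>n. pabs x n \<le> M"
proof -
  obtain M where M: "\<And>n. pabs x n \<le> M" using assms A_iff_bounded by blast
  have "0 \<le> M" using M[of 0] pabs_nonneg[of x 0] by linarith
  then show ?thesis using M that by blast
qed

lemma A_intro: "(\<And>n. pabs x n \<le> M) \<Longrightarrow> x \<in> A"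
  using A_iff_bounded by blast

lemma wnorm_tendsto:
  assumes "x \<in> A" shows "(pabs x \<longlongrightarrow> wnorm x) w"
proof -
  obtain M where M: "0 \<le> M" "\<And>n. pabs x n \<le> M" using A_boundE assms by blast
  have "\<exists>l\<in>{0..M}. (pabs x \<longlongrightarrow> l) w"
    by (rule ultrafilter_tendsto_compact[OF ultra compact_Icc]) (use M in auto)
  then obtain l where l: "(pabs x \<longlongrightarrow> l) w" by blast
  then have "Lim w (pabs x) = l" using tendsto_Lim w_not_bot by blast
  then show ?thesis using l by (simp add: wnorm_def')
qed

lemma wnorm_eqI:
  assumes "(pabs x \<longlongrightarrow> l) w" shows "wnorm x = l"
  using assms tendsto_Lim w_not_bot by (simp add: wnorm_def')

lemma wnorm_cong:
  assumes "x \<in> A" "eventually (\<lambda>n. y n = x n) w"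
  shows "wnorm y = wnorm x"
proof -
  have "eventually (\<lambda>n. pabs y n = pabs x n) w"
    using assms(2) by eventually_elim (simp add: pabs_def)
  then have "(pabs y \<longlongrightarrow> wnorm x) w"
    using wnorm_tendsto[OF assms(1)] tendsto_cong by blast
  then show ?thesis by (rule wnorm_eqI)
qed

lemma wnorm_nonneg: "x \<in> A \<Longrightarrow> 0 \<le> wnorm x"
  by (rule tendsto_lowerbound[OF wnorm_tendsto _ w_not_bot]) (auto intro: always_eventually)

lemma wnorm_le_eventually: "x \<in> A \<Longrightarrow> eventually (\<lambda>n. pabs x n \<le> c) w \<Longrightarrow> wnorm x \<le> c"
  using wnorm_tendsto tendsto_upperbound w_not_bot by blast

lemma wnorm_less_eventually: "x \<in> A \<Longrightarrow> wnorm x < c \<Longrightarrow> eventually (\<lambda>n. pabs x n < c) w"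
  using wnorm_tendsto order_tendstoD(2) by blast

lemma wnorm_gt_eventually: "x \<in> A \<Longrightarrow> c < wnorm x \<Longrightarrow> eventually (\<lambda>n. c < pabs x n) w"
  using wnorm_tendsto order_tendstoD(1) by blast

lemma pabs_add: "pabs (\<lambda>n. x n + y n) n \<le> pabs x n + pabs y n"
proof -
  have "cmod (x n + y n) powr eps n \<le> (cmod (x n) + cmod (y n)) powr eps n"
    using eps_pos[of n] by (intro powr_mono2) (auto intro: norm_triangle_ineq)
  also have "\<dots> \<le> cmod (x n) powr eps n + cmod (y n) powr eps n"
    using eps_pos[of n] eps_le1[of n] by (intro powr_add_le_add_powr) auto
  finally show ?thesis by (simp add: pabs_def)
qed

lemma pabs_mult: "pabs (\<lambda>n. x n * y n) n = pabs x n * pabs y n"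
  by (simp add: pabs_def norm_mult powr_mult)

lemma pabs_minus: "pabs (\<lambda>n. - x n) = pabs x"
  by (simp add: pabs_def[abs_def])

lemma pabs_const: "pabs (\<lambda>n. c) n \<le> max 1 (cmod c)"
proof (cases "cmod c \<le> 1")
  case True then show ?thesis using eps_pos[of n] by (simp add: pabs_def powr_le1)
next
  case False
  then have "cmod c powr eps n \<le> cmod c powr 1"
    using eps_le1[of n] by (intro powr_mono) auto
  then show ?thesis using False by (simp add: pabs_def)
qed

lemma pabs_add_le_max: "pabs (\<lambda>n. a n + b n) n \<le> 2 powr eps n * max (pabs a n) (pabs b n)"
proof -
  have e: "0 < eps n" by (rule eps_pos)
  have "cmod (a n + b n) \<le> 2 * max (cmod (a n)) (cmod (b n))"
    using norm_triangle_ineq[of "a n" "b n"] by linarith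
  then have "cmod (a n + b n) powr eps n \<le> (2 * max (cmod (a n)) (cmod (b n))) powr eps n"
    using e by (intro powr_mono2) auto
  also have "\<dots> = 2 powr eps n * max (cmod (a n)) (cmod (b n)) powr eps n"
    by (simp add: powr_mult)
  also have "max (cmod (a n)) (cmod (b n)) powr eps n = max (pabs a n) (pabs b n)"
  proof (cases "cmod (a n) \<le> cmod (b n)")
    case True
    then have "pabs a n \<le> pabs b n" using e by (simp add: pabs_def powr_mono2)
    then show ?thesis using True by (simp add: max_absorb2 pabs_def)
  next
    case False
    then have "pabs b n \<le> pabs a n" using e by (simp add: pabs_def powr_mono2)
    then show ?thesis using False by (simp add: max_absorb1 pabs_def)
  qed
  finally show ?thesis by (simp add: pabs_def)
qed

lemma A_add: "x \<in> A \<Longrightarrow> y \<in> A \<Longrightarrow> (\<lambda>n. x n + y n) \<in> A"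
proof -
  assume "x \<in> A" "y \<in> A"
  then obtain M N where M: "\<And>n. pabs x n \<le> M" and N: "\<And>n. pabs y n \<le> N" using A_boundE by metis
  have "pabs (\<lambda>n. x n + y n) n \<le> M + N" for n using pabs_add[of x y n] M[of n] N[of n] by linarith
  then show ?thesis by (rule A_intro)
qed

lemma A_mult: "x \<in> A \<Longrightarrow> y \<in> A \<Longrightarrow> (\<lambda>n. x n * y n) \<in> A"
proof -
  assume "x \<in> A" "y \<in> A"
  then obtain M N where MN: "0 \<le> M" "\<And>n. pabs x n \<le> M" "0 \<le> N" "\<And>n. pabs y n \<le> N" using A_boundE by metis
  then have "pabs (\<lambda>n. x n * y n) n \<le> M * N" for n
    unfolding pabs_mult by (intro mult_mono) auto
  then show ?thesis by (rule A_intro)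
qed

lemma A_minus: "x \<in> A \<Longrightarrow> (\<lambda>n. - x n) \<in> A"
  using A_iff_bounded pabs_minus by metis

lemma A_diff: "x \<in> A \<Longrightarrow> y \<in> A \<Longrightarrow> (\<lambda>n. x n - y n) \<in> A"
  using A_add[of x "\<lambda>n. - y n"] A_minus by simp

lemma A_const: "(\<lambda>n. c) \<in> A"
  using pabs_const by (intro A_intro)

lemmas A_closed = A_add A_mult A_minus A_const A_diff

lemma wnorm_mult: "x \<in> A \<Longrightarrow> y \<in> A \<Longrightarrow> wnorm (\<lambda>n. x n * y n) = wnorm x * wnorm y"
  by (rule wnorm_eqI) (simp add: pabs_mult[abs_def] tendsto_mult wnorm_tendsto)

lemma wnorm_add: "x \<in> A \<Longrightarrow> y \<in> A \<Longrightarrow> wnorm (\<lambda>n. x n + y n) \<le> wnorm x + wnorm y"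
  by (rule tendsto_le[OF w_not_bot _ wnorm_tendsto[OF A_add]])
     (auto intro!: tendsto_add wnorm_tendsto always_eventually simp: pabs_add)

lemma wnorm_minus: "wnorm (\<lambda>n. - x n) = wnorm x"
  by (simp add: wnorm_def' pabs_minus)

lemma wnorm_diff_comm: "wnorm (\<lambda>n. x n - y n) = wnorm (\<lambda>n. y n - x n)"
  using wnorm_minus[of "\<lambda>n. x n - y n"] by simp

lemma wnorm_triangle:
  assumes "x \<in> A" "y \<in> A" "z \<in> A"
  shows "wnorm (\<lambda>n. x n - z n) \<le> wnorm (\<lambda>n. x n - y n) + wnorm (\<lambda>n. y n - z n)"
proof -
  have "wnorm (\<lambda>n. x n - z n) = wnorm (\<lambda>n. (x n - y n) + (y n - z n))" by simp
  also have "\<dots> \<le> wnorm (\<lambda>n. x n - y n) + wnorm (\<lambda>n. y n - z n)"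
    by (rule wnorm_add) (use assms A_diff in auto)
  finally show ?thesis .
qed

lemma wnorm_le_diff:
  assumes "x \<in> A" "y \<in> A"
  shows "wnorm x \<le> wnorm y + wnorm (\<lambda>n. x n - y n)"
proof -
  have "wnorm x = wnorm (\<lambda>n. y n + (x n - y n))" by simp
  also have "\<dots> \<le> wnorm y + wnorm (\<lambda>n. x n - y n)"
    by (rule wnorm_add) (use assms A_diff in auto)
  finally show ?thesis .
qed

lemma wnorm_abs_diff:
  assumes "x \<in> A" "y \<in> A"
  shows "\<bar>wnorm x - wnorm y\<bar> \<le> wnorm (\<lambda>n. x n - y n)"
  using wnorm_le_diff[OF assms] wnorm_le_diff[OF assms(2,1)] wnorm_diff_comm[of x y] by linarith

lemma wnorm_mult_diff_le:
  assumes x: "x \<in> A" and y: "y \<in> A" and a: "a \<in> A" and b: "b \<in> A"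
  shows "wnorm (\<lambda>i. x i * y i - a i * b i)
    \<le> wnorm (\<lambda>i. x i - a i) * (wnorm b + wnorm (\<lambda>i. y i - b i)) + wnorm a * wnorm (\<lambda>i. y i - b i)"
proof -
  have d: "(\<lambda>i. x i - a i) \<in> A" "(\<lambda>i. y i - b i) \<in> A" using A_diff x y a b by auto
  have "wnorm (\<lambda>i. x i * y i - a i * b i) = wnorm (\<lambda>i. (x i - a i) * y i + a i * (y i - b i))"
    by (simp add: algebra_simps)
  also have "\<dots> \<le> wnorm (\<lambda>i. x i - a i) * wnorm y + wnorm a * wnorm (\<lambda>i. y i - b i)"
    using wnorm_add[OF A_mult[OF d(1) y] A_mult[OF a d(2)]] wnorm_mult[OF d(1) y] wnorm_mult[OF a d(2)]
    by simp
  also have "\<dots> \<le> wnorm (\<lambda>i. x i - a i) * (wnorm b + wnorm (\<lambda>i. y i - b i))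
      + wnorm a * wnorm (\<lambda>i. y i - b i)"
    using wnorm_le_diff[OF y b] wnorm_nonneg[OF d(1)] wnorm_nonneg[OF a]
    by (intro add_mono mult_left_mono) auto
  finally show ?thesis .
qed

lemma wnorm_one: "wnorm (\<lambda>n. 1) = 1"
  by (rule wnorm_eqI) (simp add: pabs_def[abs_def])

lemma wnorm_zero: "wnorm (\<lambda>n. 0) = 0"
  by (rule wnorm_eqI) (simp add: pabs_def[abs_def])

lemma wnorm_eventually_zero: "eventually (\<lambda>n. y n = 0) w \<Longrightarrow> wnorm y = 0"
  using wnorm_cong[OF A_const, of y 0] wnorm_zero by simp

lemma wnorm_pos: "b \<in> A \<Longrightarrow> wnorm b \<noteq> 0 \<Longrightarrow> 0 < wnorm b"
  using wnorm_nonneg[of b] by linarith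

(* Inverts b on the omega-large set where |b_n|^(eps_n) > |b|_omega / 2; the cut-off keeps it
   in A^eps. *)
definition inv_ev :: "cseq \<Rightarrow> cseq" where
  "inv_ev b n = (if wnorm b / 2 \<le> pabs b n then 1 / b n else 0)"

lemma inv_ev_eventually:
  assumes "b \<in> A" "wnorm b \<noteq> 0"
  shows "eventually (\<lambda>n. inv_ev b n * b n = 1) w"
proof -
  have pos: "0 < wnorm b" using wnorm_pos assms by blast
  have "eventually (\<lambda>n. wnorm b / 2 < pabs b n) w" using wnorm_gt_eventually[of b "wnorm b / 2"] assms pos by linarith
  then show ?thesis
  proof eventually_elim
    case (elim n)
    have "b n \<noteq> 0"
    proof
      assume "b n = 0" then have "pabs b n = 0" by (simp add: pabs_def)
      with elim pos show False by simp
    qed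
    then show ?case using elim by (simp add: inv_ev_def)
  qed
qed

lemma inv_ev_A:
  assumes "b \<in> A" "wnorm b \<noteq> 0"
  shows "inv_ev b \<in> A"
proof (rule A_intro)
  fix n
  have pos: "0 < wnorm b" using wnorm_pos assms by blast
  show "pabs (inv_ev b) n \<le> 2 / wnorm b"
  proof (cases "wnorm b / 2 \<le> pabs b n")
    case True
    then have pb: "0 < pabs b n" using pos by linarith
    have "pabs (inv_ev b) n = 1 / pabs b n"
      using True by (simp add: inv_ev_def pabs_def norm_divide powr_divide)
    also have "\<dots> \<le> 1 / (wnorm b / 2)"
      using True pos by (intro divide_left_mono) auto
    finally show ?thesis by simp
  next
    case False
    then show ?thesis using pos by (simp add: inv_ev_def pabs_def)
  qed
qed

definition frac_seq :: "frac \<Rightarrow> cseq" where "frac_seq p n = fst p n * inv_ev (snd p) n"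

lemma fracsD:
  assumes "p \<in> fracs eps w"
  shows "fst p \<in> A" "snd p \<in> A" "wnorm (snd p) \<noteq> 0"
  using assms by (auto simp: fracs_def omega_ker_def)

lemma fracsI:
  "fst p \<in> A \<Longrightarrow> snd p \<in> A \<Longrightarrow> wnorm (snd p) \<noteq> 0 \<Longrightarrow> p \<in> fracs eps w"
  by (cases p) (auto simp: fracs_def omega_ker_def)

lemma frac_seq_A: "p \<in> fracs eps w \<Longrightarrow> frac_seq p \<in> A"
  using A_mult[of "fst p" "inv_ev (snd p)"] inv_ev_A fracsD by (simp add: frac_seq_def[abs_def])

lemma frac_seq_eventually: "p \<in> fracs eps w \<Longrightarrow> eventually (\<lambda>n. fst p n = frac_seq p n * snd p n) w"
  using inv_ev_eventually[of "snd p"] fracsD[of p]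
  by (auto elim!: eventually_mono simp: frac_seq_def mult.assoc)

lemma frac_seq_eventually_eq:
  assumes "p \<in> fracs eps w" "eventually (\<lambda>n. fst p n = x n * snd p n) w"
  shows "eventually (\<lambda>n. frac_seq p n = x n) w"
proof -
  have "eventually (\<lambda>n. inv_ev (snd p) n * snd p n = 1) w"
    using inv_ev_eventually fracsD[OF assms(1)] by blast
  with assms(2) show ?thesis
  proof eventually_elim
    case (elim n)
    then have "frac_seq p n = x n * (inv_ev (snd p) n * snd p n)" by (simp add: frac_seq_def algebra_simps)
    then show ?case using elim by simp
  qed
qed

lemma fnorm_frac_seq:
  assumes "p \<in> fracs eps w"
  shows "fnorm eps w p = wnorm (frac_seq p)"
proof -
  note fp = fracsD[OF assms]
  have "wnorm (fst p) = wnorm (\<lambda>n. frac_seq p n * snd p n)"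
    by (rule wnorm_cong) (use A_mult frac_seq_A fp assms frac_seq_eventually in auto)
  also have "\<dots> = wnorm (frac_seq p) * wnorm (snd p)"
    using wnorm_mult frac_seq_A fp assms by blast
  finally show ?thesis using fp by (simp add: fnorm_def)
qed

lemma fdist_frac_seq:
  assumes p: "p \<in> fracs eps w" and q: "q \<in> fracs eps w"
  shows "fdist eps w p q = wnorm (\<lambda>n. frac_seq p n - frac_seq q n)"
proof -
  note fp = fracsD[OF p] and fq = fracsD[OF q]
  have VA: "(\<lambda>n. frac_seq p n - frac_seq q n) \<in> A" using A_diff frac_seq_A p q by blast
  have BA: "(\<lambda>n. snd p n * snd q n) \<in> A" using A_mult fp fq by blast
  have "wnorm (\<lambda>n. fst p n * snd q n + - fst q n * snd p n)
      = wnorm (\<lambda>n. (frac_seq p n - frac_seq q n) * (snd p n * snd q n))"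
  proof (rule wnorm_cong)
    show "(\<lambda>n. (frac_seq p n - frac_seq q n) * (snd p n * snd q n)) \<in> A" using A_mult VA BA by blast
    show "eventually (\<lambda>n. fst p n * snd q n + - fst q n * snd p n
        = (frac_seq p n - frac_seq q n) * (snd p n * snd q n)) w"
      using frac_seq_eventually[OF p] frac_seq_eventually[OF q] by eventually_elim (simp add: algebra_simps)
  qed
  also have "\<dots> = wnorm (\<lambda>n. frac_seq p n - frac_seq q n) * (wnorm (snd p) * wnorm (snd q))"
    using wnorm_mult[OF VA BA] wnorm_mult fp fq by simp
  finally show ?thesis using fp fq
    by (simp add: fdist_def fnorm_def fadd_def fneg_def wnorm_mult)
qed

lemma fadd_fracs:
  assumes p: "p \<in> fracs eps w" and q: "q \<in> fracs eps w"
  shows "fadd p q \<in> fracs eps w"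
  using fracsD[OF p] fracsD[OF q]
  by (intro fracsI) (auto simp: fadd_def intro!: A_add A_mult simp: wnorm_mult)

lemma fmul_fracs:
  assumes p: "p \<in> fracs eps w" and q: "q \<in> fracs eps w"
  shows "fmul p q \<in> fracs eps w"
  using fracsD[OF p] fracsD[OF q]
  by (intro fracsI) (auto simp: fmul_def intro!: A_mult simp: wnorm_mult)

lemma frac_seq_fadd:
  assumes p: "p \<in> fracs eps w" and q: "q \<in> fracs eps w"
  shows "eventually (\<lambda>n. frac_seq (fadd p q) n = frac_seq p n + frac_seq q n) w"
proof (rule frac_seq_eventually_eq[OF fadd_fracs[OF p q]])
  show "eventually (\<lambda>n. fst (fadd p q) n = (frac_seq p n + frac_seq q n) * snd (fadd p q) n) w"
    using frac_seq_eventually[OF p] frac_seq_eventually[OF q] by eventually_elim (simp add: fadd_def algebra_simps)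
qed

lemma frac_seq_fmul:
  assumes p: "p \<in> fracs eps w" and q: "q \<in> fracs eps w"
  shows "eventually (\<lambda>n. frac_seq (fmul p q) n = frac_seq p n * frac_seq q n) w"
proof (rule frac_seq_eventually_eq[OF fmul_fracs[OF p q]])
  show "eventually (\<lambda>n. fst (fmul p q) n = (frac_seq p n * frac_seq q n) * snd (fmul p q) n) w"
    using frac_seq_eventually[OF p] frac_seq_eventually[OF q] by eventually_elim (simp add: fmul_def algebra_simps)
qed

lemma pabs_one[simp]: "pabs (\<lambda>n. 1) n = 1" by (simp add: pabs_def)

lemma frac_seq_const[simp]: "frac_seq (a, \<lambda>n. 1) = a"
  by (rule ext) (simp add: frac_seq_def inv_ev_def wnorm_one)

lemma const_fracs: "a \<in> A \<Longrightarrow> (a, \<lambda>n. 1) \<in> fracs eps w"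
  by (rule fracsI) (auto simp: A_const wnorm_one)


lemma wnorm_principal:
  assumes "eventually (\<lambda>n. n = j) w"
  shows "wnorm x = pabs x j"
proof (rule wnorm_eqI)
  show "(pabs x \<longlongrightarrow> pabs x j) w"
    by (rule tendsto_eventually) (use assms in \<open>auto elim: eventually_mono\<close>)
qed

lemma wnorm_le_if_eventually_le_plus_inverse:
  assumes "x \<in> A" and "\<And>m. eventually (\<lambda>n. pabs x n \<le> r + inverse (real (Suc m))) w"
  shows "wnorm x \<le> r"
proof (rule LIMSEQ_le_const)
  show "(\<lambda>m. r + inverse (real (Suc m))) \<longlonglongrightarrow> r"
    using tendsto_add[OF tendsto_const LIMSEQ_inverse_real_of_nat] by simp
  show "\<exists>N. \<forall>m\<ge>N. wnorm x \<le> r + inverse (real (Suc m))"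
    using wnorm_le_eventually[OF assms(1) assms(2)] by blast
qed

lemma A_nested_balls_principal:
  fixes c :: "nat \<Rightarrow> cseq" and r :: "nat \<Rightarrow> real"
  assumes j: "eventually (\<lambda>n. n = j) w"
    and nested: "\<And>k m. k \<le> m \<Longrightarrow> wnorm (\<lambda>n. c m n - c k n) \<le> r k"
  shows "\<exists>x\<in>A. \<forall>k. wnorm (\<lambda>n. x n - c k n) \<le> r k"
proof -
  define e where "e = eps j"
  have e: "0 < e" using eps_pos by (simp add: e_def)
  have "dist (c m j) (c k j) \<le> r k powr (1 / e)" if "k \<le> m" for k m
  proof (rule le_powr_inverse_of_powr_le)
    show "dist (c m j) (c k j) powr e \<le> r k"
      using nested[OF that] by (simp add: wnorm_principal[OF j] pabs_def e_def dist_norm)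
  qed (use e in auto)
  then obtain l where l: "\<And>k. dist l (c k j) \<le> r k powr (1 / e)"
    using nested_cballs_common_point[of "\<lambda>k. c k j" "\<lambda>k. r k powr (1 / e)"] by blast
  have "wnorm (\<lambda>n. l - c k n) \<le> r k" for k
  proof -
    have r: "0 \<le> r k" using nested[of k k] wnorm_zero by simp
    have "cmod (l - c k j) powr e \<le> (r k powr (1 / e)) powr e"
      using l[of k] e by (intro powr_mono2) (auto simp: dist_norm)
    also have "\<dots> = r k" using e r by (simp add: powr_powr)
    finally show ?thesis by (simp add: wnorm_principal[OF j] pabs_def e_def)
  qed
  then show ?thesis using A_const[of l] by (intro bexI[of _ "\<lambda>n. l"]) auto
qed

lemma A_nested_balls_free:
  fixes c :: "nat \<Rightarrow> cseq" and r :: "nat \<Rightarrow> real"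
  assumes free: "w \<le> sequentially" and c: "\<And>k. c k \<in> A"
    and nested: "\<And>k m. k \<le> m \<Longrightarrow> wnorm (\<lambda>n. c m n - c k n) \<le> r k"
  shows "\<exists>x\<in>A. \<forall>k. wnorm (\<lambda>n. x n - c k n) \<le> r k"
proof -
  define P where "P k n \<longleftrightarrow> (\<forall>i\<le>k. pabs (\<lambda>j. c k j - c i j) n < r i + inverse (real (Suc k)))"
    for k n
  have ev: "eventually (P k) w" for k
  proof -
    have "eventually (\<lambda>n. \<forall>i\<in>{..k}. pabs (\<lambda>j. c k j - c i j) n < r i + inverse (real (Suc k))) w"
    proof (intro eventually_ball_finite ballI)
      fix i assume "i \<in> {..k}"
      then have "wnorm (\<lambda>j. c k j - c i j) \<le> r i"
        using nested[of i k] by simp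
      moreover have "0 < inverse (real (Suc k))" by simp
      ultimately have "wnorm (\<lambda>j. c k j - c i j) < r i + inverse (real (Suc k))"
        by linarith
      then show "eventually (\<lambda>n. pabs (\<lambda>j. c k j - c i j) n < r i + inverse (real (Suc k))) w"
        using c by (intro wnorm_less_eventually A_diff)
    qed simp
    then show ?thesis by (rule eventually_mono) (simp add: P_def)
  qed
  have "0 \<le> r 0" using nested[of 0 0] wnorm_zero by simp
  then have "P 0 n" for n by (simp add: P_def pabs_def)
  then obtain \<kappa> where \<kappa>: "\<And>n. P (\<kappa> n) n" "\<And>m. eventually (\<lambda>n. m \<le> \<kappa> n) w"
    using diagonal_index_eventually[of w P, OF free ev] by blast
  define x where "x n = c (\<kappa> n) n" for n
  obtain M where M: "\<And>n. pabs (c 0) n \<le> M" using A_boundE c by metis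
  have x: "x \<in> A"
  proof (rule A_intro)
    fix n
    have "pabs (\<lambda>j. c (\<kappa> n) j - c 0 j) n < r 0 + inverse (real (Suc (\<kappa> n)))"
      using \<kappa>(1)[of n] by (simp add: P_def)
    moreover have "inverse (real (Suc (\<kappa> n))) \<le> 1"
      by (simp add: inverse_le_1_iff)
    moreover have "pabs x n \<le> pabs (c 0) n + pabs (\<lambda>j. c (\<kappa> n) j - c 0 j) n"
      using pabs_add[of "c 0" "\<lambda>j. c (\<kappa> n) j - c 0 j" n] by (simp add: x_def pabs_def)
    ultimately show "pabs x n \<le> M + (r 0 + 1)" using M[of n] by linarith
  qed
  have "wnorm (\<lambda>n. x n - c i n) \<le> r i" for i
  proof (rule wnorm_le_if_eventually_le_plus_inverse)
    show "(\<lambda>n. x n - c i n) \<in> A" using x c by (rule A_diff)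
    fix m
    show "eventually (\<lambda>n. pabs (\<lambda>n. x n - c i n) n \<le> r i + inverse (real (Suc m))) w"
      using \<kappa>(2)[of "max i m"]
    proof eventually_elim
      case (elim n)
      then have "pabs (\<lambda>j. c (\<kappa> n) j - c i j) n < r i + inverse (real (Suc (\<kappa> n)))"
        using \<kappa>(1)[of n] by (simp add: P_def)
      also have "\<dots> \<le> r i + inverse (real (Suc m))"
        using elim by (simp add: le_imp_inverse_le)
      finally show ?case by (simp add: x_def pabs_def)
    qed
  qed
  then show ?thesis using x by blast
qed

lemma A_nested_balls_meet:
  fixes c :: "nat \<Rightarrow> cseq" and r :: "nat \<Rightarrow> real"
  assumes "\<And>k. c k \<in> A" and "\<And>k m. k \<le> m \<Longrightarrow> wnorm (\<lambda>n. c m n - c k n) \<le> r k"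
  shows "\<exists>x\<in>A. \<forall>k. wnorm (\<lambda>n. x n - c k n) \<le> r k"
proof (cases "\<exists>j. eventually (\<lambda>n. n = j) w")
  case True
  then obtain j where "eventually (\<lambda>n. n = j) w" by blast
  then show ?thesis by (rule A_nested_balls_principal[OF _ assms(2)])
next
  case False
  then have "w \<le> sequentially"
    using ultrafilter_principal_or_le_sequentially[OF ultra] by blast
  then show ?thesis by (rule A_nested_balls_free[OF _ assms])
qed

lemma A_complete:
  fixes v :: "nat \<Rightarrow> cseq"
  assumes v: "\<And>k. v k \<in> A"
    and cauchy: "\<And>d. 0 < d \<Longrightarrow> \<exists>N. \<forall>m\<ge>N. \<forall>n\<ge>N. wnorm (\<lambda>i. v m i - v n i) < d"
  shows "\<exists>x\<in>A. (\<lambda>k. wnorm (\<lambda>i. v k i - x i)) \<longlonglongrightarrow> 0"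
proof -
  have "\<exists>N. \<forall>m\<ge>N. \<forall>n\<ge>N. wnorm (\<lambda>i. v m i - v n i) < (1/2::real) ^ j" for j
    by (rule cauchy) simp
  then obtain f where f: "\<And>j m n. f j \<le> m \<Longrightarrow> f j \<le> n \<Longrightarrow> wnorm (\<lambda>i. v m i - v n i) < (1/2) ^ j"
    by metis
  define M where "M j = (\<Sum>i\<le>j. f i)" for j
  have M: "f j \<le> M m" if "j \<le> m" for j m
    unfolding M_def by (rule member_le_sum) (use that in auto)
  have "wnorm (\<lambda>i. v (M m) i - v (M j) i) \<le> (1/2) ^ j" if "j \<le> m" for j m
    using f[OF M[OF that] M[OF order_refl]] by simp
  then obtain x where x: "x \<in> A" "\<And>j. wnorm (\<lambda>n. x n - v (M j) n) \<le> (1/2) ^ j"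
    using A_nested_balls_meet[of "\<lambda>j. v (M j)" "\<lambda>j. (1/2) ^ j"] v by blast
  have close: "wnorm (\<lambda>i. v k i - x i) < 2 * (1/2) ^ j" if "f j \<le> k" for j k
  proof -
    have "wnorm (\<lambda>i. v k i - x i) \<le> wnorm (\<lambda>i. v k i - v (M j) i) + wnorm (\<lambda>i. v (M j) i - x i)"
      using wnorm_triangle v x(1) by blast
    moreover have "wnorm (\<lambda>i. v k i - v (M j) i) < (1/2) ^ j"
      using f[OF that M[OF order_refl]] .
    moreover have "wnorm (\<lambda>i. v (M j) i - x i) \<le> (1/2) ^ j"
      using x(2)[of j] wnorm_diff_comm[of x] by simp
    ultimately show ?thesis by simp
  qed
  have "(\<lambda>k. wnorm (\<lambda>i. v k i - x i)) \<longlonglongrightarrow> 0"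
  proof (rule LIMSEQ_I)
    fix d :: real assume "0 < d"
    then obtain j where j: "(1/2::real) ^ j < d / 2"
      using real_arch_pow_inv[of "d / 2" "1/2::real"] by auto
    have "norm (wnorm (\<lambda>i. v k i - x i) - 0) < d" if "f j \<le> k" for k
      using close[OF that] j wnorm_nonneg[OF A_diff[OF v x(1)]] by simp
    then show "\<exists>N. \<forall>k\<ge>N. norm (wnorm (\<lambda>i. v k i - x i) - 0) < d" by blast
  qed
  then show ?thesis using x(1) by blast
qed

abbreviation fcauchy :: "(nat \<Rightarrow> frac) \<Rightarrow> bool" where "fcauchy \<equiv> hcauchy eps w"

definition constseq :: "cseq \<Rightarrow> nat \<Rightarrow> frac" where "constseq a = (\<lambda>k. (a, \<lambda>n. 1))"
definition cls :: "cseq \<Rightarrow> (nat \<Rightarrow> frac) set" where "cls a = hclass eps w (constseq a)"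
definition fequiv :: "(nat \<Rightarrow> frac) \<Rightarrow> (nat \<Rightarrow> frac) \<Rightarrow> bool" where
  "fequiv s t \<longleftrightarrow> (\<lambda>k. wnorm (\<lambda>i. frac_seq (s k) i - frac_seq (t k) i)) \<longlonglongrightarrow> 0"

lemma fcauchy_iff: "fcauchy s \<longleftrightarrow> (\<forall>k. s k \<in> fracs eps w) \<and>
   (\<forall>d>0. \<exists>N. \<forall>m\<ge>N. \<forall>n\<ge>N. wnorm (\<lambda>i. frac_seq (s m) i - frac_seq (s n) i) < d)"
  unfolding hcauchy_def by (auto simp: fdist_frac_seq)

lemma fcauchy_fracs: "fcauchy s \<Longrightarrow> s k \<in> fracs eps w"
  by (simp add: hcauchy_def)

lemma hclass_iff: "fcauchy s \<Longrightarrow> t \<in> hclass eps w s \<longleftrightarrow> fcauchy t \<and> fequiv s t"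
  unfolding hclass_def fequiv_def by (auto simp: fdist_frac_seq fcauchy_fracs)

lemma fequiv_refl: "fequiv s s"
  by (simp add: fequiv_def wnorm_zero)

lemma fequiv_sym: "fequiv s t \<Longrightarrow> fequiv t s"
  unfolding fequiv_def by (simp add: wnorm_diff_comm[of "frac_seq (t _)"])

lemma fequiv_trans:
  assumes "fcauchy s" "fcauchy t" "fcauchy u" "fequiv s t" "fequiv t u"
  shows "fequiv s u"
  unfolding fequiv_def
proof (rule LIMSEQ_squeeze_zero)
  fix k
  have VA: "frac_seq (s k) \<in> A" "frac_seq (t k) \<in> A" "frac_seq (u k) \<in> A"
    using assms fcauchy_fracs frac_seq_A by blast+
  show "0 \<le> wnorm (\<lambda>i. frac_seq (s k) i - frac_seq (u k) i)"
    using VA A_diff wnorm_nonneg by blast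
  show "wnorm (\<lambda>i. frac_seq (s k) i - frac_seq (u k) i)
      \<le> wnorm (\<lambda>i. frac_seq (s k) i - frac_seq (t k) i) + wnorm (\<lambda>i. frac_seq (t k) i - frac_seq (u k) i)"
    using wnorm_triangle VA by blast
next
  show "(\<lambda>k. wnorm (\<lambda>i. frac_seq (s k) i - frac_seq (t k) i)
      + wnorm (\<lambda>i. frac_seq (t k) i - frac_seq (u k) i)) \<longlonglongrightarrow> 0"
    using assms(4,5) tendsto_add[of _ 0 sequentially _ 0] unfolding fequiv_def by simp
qed

lemma hclass_eq_iff:
  assumes "fcauchy s" "fcauchy t"
  shows "hclass eps w s = hclass eps w t \<longleftrightarrow> fequiv s t"
proof
  assume "hclass eps w s = hclass eps w t"
  moreover have "t \<in> hclass eps w t" using assms hclass_iff fequiv_refl by blast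
  ultimately show "fequiv s t" using assms hclass_iff by blast
next
  assume r: "fequiv s t"
  show "hclass eps w s = hclass eps w t"
  proof (intro equalityI subsetI)
    fix u assume "u \<in> hclass eps w s"
    then show "u \<in> hclass eps w t"
      using assms r hclass_iff fequiv_trans fequiv_sym by meson
  next
    fix u assume "u \<in> hclass eps w t"
    then show "u \<in> hclass eps w s"
      using assms r hclass_iff fequiv_trans fequiv_sym by meson
  qed
qed

lemma fcauchy_constseq: "a \<in> A \<Longrightarrow> fcauchy (constseq a)"
  unfolding fcauchy_iff by (auto simp: constseq_def const_fracs wnorm_zero)

lemma fequiv_constseq: "fequiv s (constseq a) \<longleftrightarrow> (\<lambda>k. wnorm (\<lambda>i. frac_seq (s k) i - a i)) \<longlonglongrightarrow> 0"
  by (simp add: fequiv_def constseq_def)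

lemma cls_eq_iff:
  assumes "a \<in> A" "b \<in> A"
  shows "cls a = cls b \<longleftrightarrow> wnorm (\<lambda>i. a i - b i) = 0"
proof -
  have "cls a = cls b \<longleftrightarrow> fequiv (constseq a) (constseq b)"
    unfolding cls_def using assms fcauchy_constseq by (simp add: hclass_eq_iff)
  also have "\<dots> \<longleftrightarrow> wnorm (\<lambda>i. a i - b i) = 0"
    by (simp add: fequiv_def constseq_def LIMSEQ_const_iff)
  finally show ?thesis .
qed

lemma fcauchy_tendsto_cls:
  assumes s: "\<And>k. s k \<in> fracs eps w" and x: "x \<in> A"
    and lim: "(\<lambda>k. wnorm (\<lambda>i. frac_seq (s k) i - x i)) \<longlonglongrightarrow> 0"
  shows "fcauchy s" "hclass eps w s = cls x"
proof -
  show cauchy: "fcauchy s"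
    unfolding fcauchy_iff
  proof (intro conjI allI impI)
    fix d :: real assume "0 < d"
    then obtain N where N: "\<And>k. k \<ge> N \<Longrightarrow> norm (wnorm (\<lambda>i. frac_seq (s k) i - x i) - 0) < d/2"
      using LIMSEQ_D[OF lim, of "d/2"] by auto
    have "wnorm (\<lambda>i. frac_seq (s m) i - frac_seq (s n) i) < d" if "m \<ge> N" "n \<ge> N" for m n
    proof -
      have VA: "frac_seq (s m) \<in> A" "frac_seq (s n) \<in> A" using s frac_seq_A by blast+
      have "wnorm (\<lambda>i. frac_seq (s m) i - frac_seq (s n) i) \<le> wnorm (\<lambda>i. frac_seq (s m) i - x i) + wnorm (\<lambda>i. x i - frac_seq (s n) i)"
        using wnorm_triangle VA x by blast
      moreover have "wnorm (\<lambda>i. x i - frac_seq (s n) i) = wnorm (\<lambda>i. frac_seq (s n) i - x i)" by (rule wnorm_diff_comm)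
      ultimately show ?thesis using N[OF that(1)] N[OF that(2)] by simp
    qed
    then show "\<exists>N. \<forall>m\<ge>N. \<forall>n\<ge>N. wnorm (\<lambda>i. frac_seq (s m) i - frac_seq (s n) i) < d" by blast
  qed (use s in blast)
  show "hclass eps w s = cls x"
    unfolding cls_def using cauchy fcauchy_constseq[OF x] lim by (simp add: hclass_eq_iff fequiv_constseq)
qed

lemma fcauchy_equiv_constseq: "fcauchy s \<Longrightarrow> \<exists>x\<in>A. fequiv s (constseq x)"
proof -
  assume cauchy: "fcauchy s"
  have "\<exists>x\<in>A. (\<lambda>k. wnorm (\<lambda>i. frac_seq (s k) i - x i)) \<longlonglongrightarrow> 0"
    by (rule A_complete) (use cauchy frac_seq_A fcauchy_fracs fcauchy_iff in auto)
  then show ?thesis by (simp add: fequiv_constseq)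
qed

lemma carrier_H: "carrier (H eps w) = cls ` A"
proof
  show "carrier (H eps w) \<subseteq> cls ` A"
  proof
    fix U assume "U \<in> carrier (H eps w)"
    then obtain s where s: "fcauchy s" "U = hclass eps w s" by (auto simp: H_def Hcarrier_def)
    then obtain x where "x \<in> A" "fequiv s (constseq x)" using fcauchy_equiv_constseq by blast
    then have "U = cls x" using s fcauchy_constseq by (simp add: cls_def hclass_eq_iff)
    then show "U \<in> cls ` A" using \<open>x \<in> A\<close> by blast
  qed
  show "cls ` A \<subseteq> carrier (H eps w)"
    using fcauchy_constseq by (auto simp: H_def Hcarrier_def cls_def)
qed

lemma hrep_cls:
  assumes "a \<in> A"
  shows "fcauchy (hrep (cls a))" "(\<lambda>k. wnorm (\<lambda>i. frac_seq (hrep (cls a) k) i - a i)) \<longlonglongrightarrow> 0"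
proof -
  have "constseq a \<in> cls a" using fcauchy_constseq[OF assms] hclass_iff fequiv_refl by (simp add: cls_def)
  then have "hrep (cls a) \<in> cls a" unfolding hrep_def using someI[of "\<lambda>s. s \<in> cls a" "constseq a"] by simp
  then have "fcauchy (hrep (cls a)) \<and> fequiv (constseq a) (hrep (cls a))"
    using fcauchy_constseq[OF assms] hclass_iff by (simp add: cls_def)
  then show "fcauchy (hrep (cls a))" "(\<lambda>k. wnorm (\<lambda>i. frac_seq (hrep (cls a) k) i - a i)) \<longlonglongrightarrow> 0"
    using fequiv_sym fequiv_constseq by blast+
qed

lemma add_cls:
  assumes a: "a \<in> A" and b: "b \<in> A"
  shows "cls a \<oplus>\<^bsub>H eps w\<^esub> cls b = cls (\<lambda>n. a n + b n)"
proof -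
  define s where "s = hrep (cls a)"
  define t where "t = hrep (cls b)"
  note hs = hrep_cls[OF a, folded s_def] and ht = hrep_cls[OF b, folded t_def]
  have sf: "s k \<in> fracs eps w" "t k \<in> fracs eps w" for k
    using fcauchy_fracs[OF hs(1)] fcauchy_fracs[OF ht(1)] by auto
  have "hclass eps w (\<lambda>k. fadd (s k) (t k)) = cls (\<lambda>n. a n + b n)"
  proof (rule fcauchy_tendsto_cls(2))
    show "fadd (s k) (t k) \<in> fracs eps w" for k using fadd_fracs[OF sf] .
    show "(\<lambda>n. a n + b n) \<in> A" using A_add[OF a b] .
    show "(\<lambda>k. wnorm (\<lambda>i. frac_seq (fadd (s k) (t k)) i - (a i + b i))) \<longlonglongrightarrow> 0"
    proof (rule LIMSEQ_squeeze_zero)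
      fix k
      have d1: "(\<lambda>i. frac_seq (s k) i - a i) \<in> A" "(\<lambda>i. frac_seq (t k) i - b i) \<in> A"
        using A_diff[OF frac_seq_A[OF sf(1)] a] A_diff[OF frac_seq_A[OF sf(2)] b] by auto
      have xA: "(\<lambda>i. (frac_seq (s k) i - a i) + (frac_seq (t k) i - b i)) \<in> A"
        using A_add[OF d1] by simp
      have eq: "wnorm (\<lambda>i. frac_seq (fadd (s k) (t k)) i - (a i + b i))
          = wnorm (\<lambda>i. (frac_seq (s k) i - a i) + (frac_seq (t k) i - b i))"
        by (rule wnorm_cong[OF xA]) (use frac_seq_fadd[OF sf] in \<open>auto elim!: eventually_mono\<close>)
      show "0 \<le> wnorm (\<lambda>i. frac_seq (fadd (s k) (t k)) i - (a i + b i))"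
        unfolding eq using wnorm_nonneg[OF xA] .
      show "wnorm (\<lambda>i. frac_seq (fadd (s k) (t k)) i - (a i + b i))
          \<le> wnorm (\<lambda>i. frac_seq (s k) i - a i) + wnorm (\<lambda>i. frac_seq (t k) i - b i)"
        unfolding eq using wnorm_add[OF d1] .
    next
      show "(\<lambda>k. wnorm (\<lambda>i. frac_seq (s k) i - a i) + wnorm (\<lambda>i. frac_seq (t k) i - b i)) \<longlonglongrightarrow> 0"
        using tendsto_add[OF hs(2) ht(2)] by simp
    qed
  qed
  then show ?thesis by (simp add: H_def s_def t_def)
qed

lemma mult_cls:
  assumes a: "a \<in> A" and b: "b \<in> A"
  shows "cls a \<otimes>\<^bsub>H eps w\<^esub> cls b = cls (\<lambda>n. a n * b n)"
proof -
  define s where "s = hrep (cls a)"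
  define t where "t = hrep (cls b)"
  note hs = hrep_cls[OF a, folded s_def] and ht = hrep_cls[OF b, folded t_def]
  have sf: "s k \<in> fracs eps w" "t k \<in> fracs eps w" for k
    using fcauchy_fracs[OF hs(1)] fcauchy_fracs[OF ht(1)] by auto
  have "hclass eps w (\<lambda>k. fmul (s k) (t k)) = cls (\<lambda>n. a n * b n)"
  proof (rule fcauchy_tendsto_cls(2))
    show "fmul (s k) (t k) \<in> fracs eps w" for k using fmul_fracs[OF sf] .
    show "(\<lambda>n. a n * b n) \<in> A" using A_mult[OF a b] .
    show "(\<lambda>k. wnorm (\<lambda>i. frac_seq (fmul (s k) (t k)) i - a i * b i)) \<longlonglongrightarrow> 0"
    proof (rule LIMSEQ_squeeze_zero)
      fix k
      have VA: "frac_seq (s k) \<in> A" "frac_seq (t k) \<in> A" using frac_seq_A sf by auto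
      have eq: "wnorm (\<lambda>i. frac_seq (fmul (s k) (t k)) i - a i * b i)
          = wnorm (\<lambda>i. frac_seq (s k) i * frac_seq (t k) i - a i * b i)"
        by (rule wnorm_cong) (use frac_seq_fmul[OF sf] VA a b in \<open>auto elim!: eventually_mono intro: A_closed\<close>)
      show "0 \<le> wnorm (\<lambda>i. frac_seq (fmul (s k) (t k)) i - a i * b i)"
        unfolding eq using VA a b by (intro wnorm_nonneg A_closed)
      show "wnorm (\<lambda>i. frac_seq (fmul (s k) (t k)) i - a i * b i)
          \<le> wnorm (\<lambda>i. frac_seq (s k) i - a i) * (wnorm b + wnorm (\<lambda>i. frac_seq (t k) i - b i))
            + wnorm a * wnorm (\<lambda>i. frac_seq (t k) i - b i)"
        unfolding eq using VA a b by (rule wnorm_mult_diff_le)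
    next
      show "(\<lambda>k. wnorm (\<lambda>i. frac_seq (s k) i - a i) * (wnorm b + wnorm (\<lambda>i. frac_seq (t k) i - b i))
          + wnorm a * wnorm (\<lambda>i. frac_seq (t k) i - b i)) \<longlonglongrightarrow> 0"
        using hs(2) ht(2) by (auto intro!: tendsto_eq_intros)
    qed
  qed
  then show ?thesis by (simp add: H_def s_def t_def)
qed

lemma one_H: "\<one>\<^bsub>H eps w\<^esub> = cls (\<lambda>n. 1)"
  by (simp add: H_def cls_def constseq_def)

lemma zero_H: "\<zero>\<^bsub>H eps w\<^esub> = cls (\<lambda>n. 0)"
  by (simp add: H_def cls_def constseq_def)

lemma Hnorm_cls:
  assumes a: "a \<in> A"
  shows "Hnorm eps w (cls a) = wnorm a"
proof -
  define s where "s = hrep (cls a)"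
  note hs = hrep_cls[OF a, folded s_def]
  have sf: "s k \<in> fracs eps w" for k using hs fcauchy_fracs by blast
  have "(\<lambda>k. wnorm (frac_seq (s k)) - wnorm a) \<longlonglongrightarrow> 0"
  proof (rule Lim_null_comparison[OF _ hs(2)])
    show "eventually (\<lambda>k. norm (wnorm (frac_seq (s k)) - wnorm a) \<le> wnorm (\<lambda>i. frac_seq (s k) i - a i)) sequentially"
      using wnorm_abs_diff frac_seq_A sf a by (auto intro: always_eventually)
  qed
  then have "(\<lambda>k. (wnorm (frac_seq (s k)) - wnorm a) + wnorm a) \<longlonglongrightarrow> 0 + wnorm a"
    by (intro tendsto_add) auto
  then have "(\<lambda>k. fnorm eps w (s k)) \<longlonglongrightarrow> wnorm a"
    using fnorm_frac_seq sf by simp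
  then show ?thesis by (simp add: Hnorm_def s_def limI)
qed

lemma cls_carrier[simp]: "a \<in> A \<Longrightarrow> cls a \<in> carrier (H eps w)"
  by (simp add: carrier_H)

lemma carrierE:
  assumes "x \<in> carrier (H eps w)" obtains a where "a \<in> A" "x = cls a"
  using assms by (auto simp: carrier_H)

definition cls_rep :: "(nat \<Rightarrow> frac) set \<Rightarrow> cseq" where
  "cls_rep U = (SOME x. x \<in> A \<and> U = cls x)"

lemma cls_rep: "U \<in> carrier (H eps w) \<Longrightarrow> cls_rep U \<in> A \<and> U = cls (cls_rep U)"
proof -
  assume "U \<in> carrier (H eps w)"
  then obtain x where "x \<in> A" "U = cls x" by (rule carrierE)
  then show ?thesis unfolding cls_rep_def using someI[of "\<lambda>x. x \<in> A \<and> U = cls x" x] by blast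
qed

lemma H_cring: "cring (H eps w)"
proof (rule cringI)
  show "abelian_group (H eps w)"
  proof (rule abelian_groupI)
    fix x y assume "x \<in> carrier (H eps w)" "y \<in> carrier (H eps w)"
    then show "x \<oplus>\<^bsub>H eps w\<^esub> y \<in> carrier (H eps w)"
      by (auto elim!: carrierE simp: add_cls A_closed)
  next
    show "\<zero>\<^bsub>H eps w\<^esub> \<in> carrier (H eps w)" by (simp add: zero_H A_const)
  next
    fix x y z assume "x \<in> carrier (H eps w)" "y \<in> carrier (H eps w)" "z \<in> carrier (H eps w)"
    then show "x \<oplus>\<^bsub>H eps w\<^esub> y \<oplus>\<^bsub>H eps w\<^esub> z = x \<oplus>\<^bsub>H eps w\<^esub> (y \<oplus>\<^bsub>H eps w\<^esub> z)"
      by (auto elim!: carrierE simp: add_cls A_closed add.assoc)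
  next
    fix x y assume "x \<in> carrier (H eps w)" "y \<in> carrier (H eps w)"
    then show "x \<oplus>\<^bsub>H eps w\<^esub> y = y \<oplus>\<^bsub>H eps w\<^esub> x"
      by (auto elim!: carrierE simp: add_cls A_closed add.commute)
  next
    fix x assume "x \<in> carrier (H eps w)"
    then show "\<zero>\<^bsub>H eps w\<^esub> \<oplus>\<^bsub>H eps w\<^esub> x = x"
      by (auto elim!: carrierE simp: add_cls zero_H A_closed)
  next
    fix x assume "x \<in> carrier (H eps w)"
    then obtain a where a: "a \<in> A" "x = cls a" by (rule carrierE)
    have "cls (\<lambda>n. - a n) \<oplus>\<^bsub>H eps w\<^esub> x = \<zero>\<^bsub>H eps w\<^esub>"
      using a by (simp add: add_cls zero_H A_closed)
    then show "\<exists>y\<in>carrier (H eps w). y \<oplus>\<^bsub>H eps w\<^esub> x = \<zero>\<^bsub>H eps w\<^esub>"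
      using a by (intro bexI[of _ "cls (\<lambda>n. - a n)"]) (auto simp: A_closed)
  qed
next
  show "comm_monoid (H eps w)"
  proof (rule comm_monoidI)
    fix x y assume "x \<in> carrier (H eps w)" "y \<in> carrier (H eps w)"
    then show "x \<otimes>\<^bsub>H eps w\<^esub> y \<in> carrier (H eps w)"
      by (auto elim!: carrierE simp: mult_cls A_closed)
  next
    show "\<one>\<^bsub>H eps w\<^esub> \<in> carrier (H eps w)" by (simp add: one_H A_const)
  next
    fix x y z assume "x \<in> carrier (H eps w)" "y \<in> carrier (H eps w)" "z \<in> carrier (H eps w)"
    then show "x \<otimes>\<^bsub>H eps w\<^esub> y \<otimes>\<^bsub>H eps w\<^esub> z = x \<otimes>\<^bsub>H eps w\<^esub> (y \<otimes>\<^bsub>H eps w\<^esub> z)"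
      by (auto elim!: carrierE simp: mult_cls A_closed mult.assoc)
  next
    fix x assume "x \<in> carrier (H eps w)"
    then show "\<one>\<^bsub>H eps w\<^esub> \<otimes>\<^bsub>H eps w\<^esub> x = x"
      by (auto elim!: carrierE simp: mult_cls one_H A_closed)
  next
    fix x y assume "x \<in> carrier (H eps w)" "y \<in> carrier (H eps w)"
    then show "x \<otimes>\<^bsub>H eps w\<^esub> y = y \<otimes>\<^bsub>H eps w\<^esub> x"
      by (auto elim!: carrierE simp: mult_cls A_closed mult.commute)
  qed
next
  fix x y z assume "x \<in> carrier (H eps w)" "y \<in> carrier (H eps w)" "z \<in> carrier (H eps w)"
  then show "(x \<oplus>\<^bsub>H eps w\<^esub> y) \<otimes>\<^bsub>H eps w\<^esub> z = x \<otimes>\<^bsub>H eps w\<^esub> z \<oplus>\<^bsub>H eps w\<^esub> y \<otimes>\<^bsub>H eps w\<^esub> z"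
    by (auto elim!: carrierE simp: mult_cls add_cls A_closed distrib_right)
qed

lemma cls_zero_iff: "a \<in> A \<Longrightarrow> cls a = \<zero>\<^bsub>H eps w\<^esub> \<longleftrightarrow> wnorm a = 0"
  by (simp add: zero_H cls_eq_iff A_const)

lemma H_field: "field (H eps w)"
proof -
  interpret cring "H eps w" by (rule H_cring)
  show ?thesis
  proof (rule field_intro2)
    have "wnorm (\<lambda>i. 0 - 1) = 1" using wnorm_minus[of "\<lambda>i. 1"] wnorm_one by simp
    then show "\<zero>\<^bsub>H eps w\<^esub> \<noteq> \<one>\<^bsub>H eps w\<^esub>"
      by (simp add: zero_H one_H cls_eq_iff A_const)
  next
    fix x assume x: "x \<in> carrier (H eps w) - {\<zero>\<^bsub>H eps w\<^esub>}"
    then obtain a where a: "a \<in> A" "x = cls a" by (auto elim: carrierE)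
    then have na: "wnorm a \<noteq> 0" using x cls_zero_iff by auto
    have iA: "inv_ev a \<in> A" using inv_ev_A a na by blast
    have "wnorm (\<lambda>i. inv_ev a i * a i - 1) = 0"
      by (rule wnorm_eventually_zero) (use inv_ev_eventually[OF a(1) na] in \<open>auto elim!: eventually_mono\<close>)
    then have e1: "cls (inv_ev a) \<otimes>\<^bsub>H eps w\<^esub> x = \<one>\<^bsub>H eps w\<^esub>"
      using a iA by (simp add: mult_cls one_H cls_eq_iff A_closed)
    then have e2: "x \<otimes>\<^bsub>H eps w\<^esub> cls (inv_ev a) = \<one>\<^bsub>H eps w\<^esub>"
      using a iA m_comm by simp
    show "x \<in> Units (H eps w)"
      unfolding Units_def using e1 e2 x iA by auto
  qed
qed

lemma Hnorm_nonneg: "x \<in> carrier (H eps w) \<Longrightarrow> 0 \<le> Hnorm eps w x"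
  by (auto elim!: carrierE simp: Hnorm_cls wnorm_nonneg)

lemma H_metrized_field: "metrized_field (H eps w) (Hnorm eps w)"
  unfolding metrized_field_def
proof (intro conjI ballI)
  show "field (H eps w)" by (rule H_field)
next
  fix x assume "x \<in> carrier (H eps w)"
  then obtain a where a: "a \<in> A" "x = cls a" by (rule carrierE)
  show "0 \<le> Hnorm eps w x" using a by (simp add: Hnorm_cls wnorm_nonneg)
  show "(Hnorm eps w x = 0) = (x = \<zero>\<^bsub>H eps w\<^esub>)" using a by (simp add: Hnorm_cls cls_zero_iff)
next
  fix x y assume "x \<in> carrier (H eps w)" "y \<in> carrier (H eps w)"
  then obtain a b where a: "a \<in> A" "x = cls a" and b: "b \<in> A" "y = cls b" by (metis carrierE)
  show "Hnorm eps w (x \<otimes>\<^bsub>H eps w\<^esub> y) = Hnorm eps w x * Hnorm eps w y"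
    using a b by (simp add: mult_cls Hnorm_cls A_closed wnorm_mult)
  show "Hnorm eps w (x \<oplus>\<^bsub>H eps w\<^esub> y) \<le> Hnorm eps w x + Hnorm eps w y"
    using a b by (simp add: add_cls Hnorm_cls A_closed wnorm_add)
qed

lemma minus_cls:
  assumes a: "a \<in> A" and b: "b \<in> A"
  shows "cls a \<ominus>\<^bsub>H eps w\<^esub> cls b = cls (\<lambda>n. a n - b n)"
proof -
  interpret cring "H eps w" by (rule H_cring)
  have "cls (\<lambda>n. - b n) \<oplus>\<^bsub>H eps w\<^esub> cls b = \<zero>\<^bsub>H eps w\<^esub>"
    using b by (simp add: add_cls zero_H A_closed)
  then have "\<ominus>\<^bsub>H eps w\<^esub> cls b = cls (\<lambda>n. - b n)"
    using b by (intro minus_equality) (auto simp: A_closed)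
  then show ?thesis using a b by (simp add: minus_eq add_cls A_closed)
qed

lemma Hnorm_minus_cls:
  "a \<in> A \<Longrightarrow> b \<in> A \<Longrightarrow> Hnorm eps w (cls a \<ominus>\<^bsub>H eps w\<^esub> cls b) = wnorm (\<lambda>n. a n - b n)"
  by (simp add: minus_cls Hnorm_cls A_diff)

lemma H_spherically_complete: "spherically_complete (H eps w) (Hnorm eps w)"
  unfolding spherically_complete_def
proof (intro allI impI)
  fix c r
  assume h: "(\<forall>n. c n \<in> carrier (H eps w) \<and> 0 \<le> r n) \<and>
     (\<forall>n. closed_ball_in (H eps w) (Hnorm eps w) (c (Suc n)) (r (Suc n))
          \<subseteq> closed_ball_in (H eps w) (Hnorm eps w) (c n) (r n))"
  define B where "B n = closed_ball_in (H eps w) (Hnorm eps w) (c n) (r n)" for n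
  define a where "a n = cls_rep (c n)" for n
  have a: "a n \<in> A" "c n = cls (a n)" for n
    using cls_rep h by (auto simp: a_def)
  have ball: "cls y \<in> B n \<longleftrightarrow> wnorm (\<lambda>i. y i - a n i) \<le> r n" if "y \<in> A" for y n
    using that a[of n] by (simp add: B_def closed_ball_in_def Hnorm_minus_cls)
  have "wnorm (\<lambda>i. a m i - a k i) \<le> r k" if "k \<le> m" for k m
  proof -
    have "B m \<subseteq> B k"
      by (rule lift_Suc_antimono_le[of B, OF _ that]) (use h in \<open>simp add: B_def\<close>)
    moreover have "cls (a m) \<in> B m"
      using ball[OF a(1)] h by (simp add: wnorm_zero)
    ultimately show ?thesis using ball[OF a(1)] by blast
  qed
  then obtain x where "x \<in> A" "\<And>k. wnorm (\<lambda>i. x i - a k i) \<le> r k"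
    using A_nested_balls_meet[of a r] a by blast
  then have "cls x \<in> (\<Inter>n. B n)" using ball by blast
  then show "(\<Inter>n. closed_ball_in (H eps w) (Hnorm eps w) (c n) (r n)) \<noteq> {}"
    by (auto simp: B_def)
qed

lemma Hnorm_image: "Hnorm eps w ` carrier (H eps w) = {0..}"
proof
  show "Hnorm eps w ` carrier (H eps w) \<subseteq> {0..}" using Hnorm_nonneg by auto
  show "{0..} \<subseteq> Hnorm eps w ` carrier (H eps w)"
  proof
    fix t :: real assume "t \<in> {0..}"
    then have t: "0 \<le> t" by simp
    define a where "a n = complex_of_real (t powr (1 / eps n))" for n
    have pwa: "pabs a n = t" for n
      using t eps_pos[of n] by (simp add: a_def pabs_def powr_powr)
    have aA: "a \<in> A" using pwa by (intro A_intro[of _ t]) simp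
    have "wnorm a = t" by (rule wnorm_eqI) (simp add: pwa[abs_def])
    then have "Hnorm eps w (cls a) = t" using aA by (simp add: Hnorm_cls)
    then show "t \<in> Hnorm eps w ` carrier (H eps w)" using aA by force
  qed
qed

lemma H_non_archimedean:
  assumes e0: "(eps \<longlongrightarrow> 0) w"
  shows "non_archimedean (H eps w) (Hnorm eps w)"
  unfolding non_archimedean_def
proof (intro ballI)
  fix x y assume "x \<in> carrier (H eps w)" "y \<in> carrier (H eps w)"
  then obtain a b where a: "a \<in> A" "x = cls a" and b: "b \<in> A" "y = cls b" by (metis carrierE)
  have lim: "((\<lambda>n. 2 powr eps n * max (pabs a n) (pabs b n)) \<longlongrightarrow> 2 powr 0 * max (wnorm a) (wnorm b)) w"
    by (intro tendsto_mult tendsto_max wnorm_tendsto tendsto_powr e0 a b tendsto_const) simp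
  have "wnorm (\<lambda>n. a n + b n) \<le> 2 powr 0 * max (wnorm a) (wnorm b)"
    by (rule tendsto_le[OF w_not_bot lim wnorm_tendsto[OF A_add[OF a(1) b(1)]]])
       (auto intro: always_eventually pabs_add_le_max)
  then show "Hnorm eps w (x \<oplus>\<^bsub>H eps w\<^esub> y) \<le> max (Hnorm eps w x) (Hnorm eps w y)"
    using a b by (simp add: add_cls Hnorm_cls A_closed)
qed

context
  fixes e :: real
  assumes ee: "(eps \<longlongrightarrow> e) w" and epos: "0 < e"
begin

lemma eps_gt_half_eventually: "eventually (\<lambda>n. e/2 < eps n) w"
  using order_tendstoD(1)[OF ee, of "e/2"] epos by simp

lemma A_eventually_bounded:
  assumes "x \<in> A" shows "\<exists>B. eventually (\<lambda>n. cmod (x n) \<le> B) w"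
proof -
  obtain M where M: "0 \<le> M" "\<And>n. pabs x n \<le> M" using A_boundE assms by metis
  define M' where "M' = max 1 M"
  have M'1: "1 \<le> M'" by (simp add: M'_def)
  have "eventually (\<lambda>n. cmod (x n) \<le> M' powr (2/e)) w"
    using eps_gt_half_eventually
  proof eventually_elim
    case (elim n)
    have en: "0 < eps n" by (rule eps_pos)
    show ?case
    proof (cases "cmod (x n) \<le> 1")
      case True
      moreover have "1 \<le> M' powr (2/e)" using epos M'1 by (intro ge_one_powr_ge_zero) auto
      ultimately show ?thesis by linarith
    next
      case False
      have ie: "1 / eps n \<le> 2 / e" using elim en epos by (simp add: field_simps)
      have "cmod (x n) \<le> pabs x n powr (1/eps n)"
        using en by (intro le_powr_inverse_of_powr_le) (auto simp: pabs_def)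
      also have "\<dots> \<le> M' powr (1/eps n)"
        using en M(2)[of n] by (intro powr_mono2) (auto simp: M'_def le_max_iff_disj)
      also have "\<dots> \<le> M' powr (2/e)" using ie M'1 by (intro powr_mono) auto
      finally show ?thesis .
    qed
  qed
  then show ?thesis by blast
qed

definition wlim :: "cseq \<Rightarrow> complex" where "wlim x = Lim w x"

lemma wlim_tendsto:
  assumes "x \<in> A" shows "(x \<longlongrightarrow> wlim x) w"
proof -
  obtain B where B: "eventually (\<lambda>n. cmod (x n) \<le> B) w" using A_eventually_bounded assms by blast
  have "\<exists>l\<in>cball 0 B. (x \<longlongrightarrow> l) w"
    by (rule ultrafilter_tendsto_compact[OF ultra compact_cball]) (use B in \<open>auto elim!: eventually_mono\<close>)
  then obtain l where l: "(x \<longlongrightarrow> l) w" by blast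
  then have "Lim w x = l" using tendsto_Lim w_not_bot by blast
  then show ?thesis using l by (simp add: wlim_def)
qed

lemma wlim_eqI: "(x \<longlongrightarrow> l) w \<Longrightarrow> wlim x = l"
  using tendsto_Lim w_not_bot by (simp add: wlim_def)

lemma wnorm_eq_wlim_powr:
  assumes "x \<in> A" shows "wnorm x = cmod (wlim x) powr e"
proof (rule wnorm_eqI)
  have "((\<lambda>n. cmod (x n) powr eps n) \<longlongrightarrow> cmod (wlim x) powr e) w"
    by (rule tendsto_powr'[OF tendsto_norm[OF wlim_tendsto[OF assms]] ee]) (use epos in auto)
  then show "(pabs x \<longlongrightarrow> cmod (wlim x) powr e) w" by (simp add: pabs_fun)
qed

lemma wlim_add: "x \<in> A \<Longrightarrow> y \<in> A \<Longrightarrow> wlim (\<lambda>n. x n + y n) = wlim x + wlim y"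
  by (intro wlim_eqI tendsto_add wlim_tendsto)

lemma wlim_mult: "x \<in> A \<Longrightarrow> y \<in> A \<Longrightarrow> wlim (\<lambda>n. x n * y n) = wlim x * wlim y"
  by (intro wlim_eqI tendsto_mult wlim_tendsto)

lemma wlim_diff: "x \<in> A \<Longrightarrow> y \<in> A \<Longrightarrow> wlim (\<lambda>n. x n - y n) = wlim x - wlim y"
  by (intro wlim_eqI tendsto_diff wlim_tendsto)

lemma wlim_const: "wlim (\<lambda>n. z) = z"
  by (intro wlim_eqI tendsto_const)

lemma wlim_eq_iff:
  assumes "a \<in> A" "b \<in> A"
  shows "wlim a = wlim b \<longleftrightarrow> wnorm (\<lambda>n. a n - b n) = 0"
  using wnorm_eq_wlim_powr[OF A_diff[OF assms]] wlim_diff[OF assms] epos by simp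

definition Hlim :: "(nat \<Rightarrow> frac) set \<Rightarrow> complex" where
  "Hlim U = wlim (cls_rep U)"

lemma Hlim_cls:
  assumes a: "a \<in> A" shows "Hlim (cls a) = wlim a"
proof -
  define b where "b = cls_rep (cls a)"
  have b: "b \<in> A" "cls a = cls b" using cls_rep[of "cls a"] a by (auto simp: b_def)
  then have "wnorm (\<lambda>n. b n - a n) = 0" using a cls_eq_iff by metis
  then show ?thesis using wlim_eq_iff[OF b(1) a] by (simp add: Hlim_def b_def)
qed

lemma Hlim_ring_iso: "Hlim \<in> ring_iso (H eps w) C_ring"
  unfolding ring_iso_def
proof (intro CollectI conjI)
  show "Hlim \<in> ring_hom (H eps w) C_ring"
    unfolding ring_hom_def
  proof (intro CollectI conjI allI impI)
    show "Hlim \<in> carrier (H eps w) \<rightarrow> carrier C_ring" by (simp add: C_ring_def)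
  next
    fix x y assume "x \<in> carrier (H eps w) \<and> y \<in> carrier (H eps w)"
    then obtain a b where a: "a \<in> A" "x = cls a" and b: "b \<in> A" "y = cls b" by (metis carrierE)
    show "Hlim (x \<otimes>\<^bsub>H eps w\<^esub> y) = Hlim x \<otimes>\<^bsub>C_ring\<^esub> Hlim y"
      using a b by (simp add: mult_cls Hlim_cls A_closed wlim_mult C_ring_def)
    show "Hlim (x \<oplus>\<^bsub>H eps w\<^esub> y) = Hlim x \<oplus>\<^bsub>C_ring\<^esub> Hlim y"
      using a b by (simp add: add_cls Hlim_cls A_closed wlim_add C_ring_def)
  next
    show "Hlim \<one>\<^bsub>H eps w\<^esub> = \<one>\<^bsub>C_ring\<^esub>"
      by (simp add: one_H Hlim_cls A_const wlim_const C_ring_def)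
  qed
  show "bij_betw Hlim (carrier (H eps w)) (carrier C_ring)"
  proof (rule bij_betwI')
    fix x y assume "x \<in> carrier (H eps w)" "y \<in> carrier (H eps w)"
    then obtain a b where a: "a \<in> A" "x = cls a" and b: "b \<in> A" "y = cls b" by (metis carrierE)
    show "(Hlim x = Hlim y) = (x = y)"
      using a b by (simp add: Hlim_cls wlim_eq_iff cls_eq_iff)
  next
    fix x assume "x \<in> carrier (H eps w)"
    then show "Hlim x \<in> carrier C_ring" by (simp add: C_ring_def)
  next
    fix z assume "z \<in> carrier C_ring"
    have "Hlim (cls (\<lambda>n. z)) = z" by (simp add: Hlim_cls A_const wlim_const)
    then show "\<exists>x\<in>carrier (H eps w). z = Hlim x" using A_const[of z] by (intro bexI[of _ "cls (\<lambda>n. z)"]) auto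
  qed
qed

lemma Hnorm_Hlim: "U \<in> carrier (H eps w) \<Longrightarrow> Hnorm eps w U = cmod (Hlim U) powr e"
  by (auto elim!: carrierE simp: Hnorm_cls Hlim_cls wnorm_eq_wlim_powr)

lemma H_not_non_archimedean: "\<not> non_archimedean (H eps w) (Hnorm eps w)"
proof
  assume na: "non_archimedean (H eps w) (Hnorm eps w)"
  have one: "\<one>\<^bsub>H eps w\<^esub> \<in> carrier (H eps w)" by (simp add: one_H A_const)
  have "Hnorm eps w (\<one>\<^bsub>H eps w\<^esub> \<oplus>\<^bsub>H eps w\<^esub> \<one>\<^bsub>H eps w\<^esub>) = 2 powr e"
    by (simp add: one_H add_cls A_const Hnorm_cls wnorm_eq_wlim_powr wlim_const)
  moreover have "Hnorm eps w \<one>\<^bsub>H eps w\<^esub> = 1"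
    by (simp add: one_H A_const Hnorm_cls wnorm_one)
  moreover have "1 < (2::real) powr e"
    using powr_less_mono[of 0 e 2] epos by simp
  ultimately show False using na one unfolding non_archimedean_def by fastforce
qed


end

lemma A_pow: "a \<in> A \<Longrightarrow> (\<lambda>k. a k ^ n) \<in> A"
proof (induction n)
  case 0 then show ?case using A_const by simp
next
  case (Suc n) then show ?case using A_mult[of "\<lambda>k. a k ^ n" a] by (simp add: mult.commute)
qed

lemma pow_cls: "a \<in> A \<Longrightarrow> cls a [^]\<^bsub>H eps w\<^esub> (n::nat) = cls (\<lambda>k. a k ^ n)"
proof (induction n)
  case 0 then show ?case by (simp add: one_H)
next
  case (Suc n) then show ?case by (simp add: mult_cls A_pow mult.commute)
qed

lemma eval_cls:
  assumes "\<forall>q\<in>set qs. q \<in> A" "z \<in> A"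
  shows "(\<lambda>n. eval_desc (map (\<lambda>q. q n) qs) (z n)) \<in> A \<and>
    ring.eval (H eps w) (map cls qs) (cls z) = cls (\<lambda>n. eval_desc (map (\<lambda>q. q n) qs) (z n))"
  using assms(1)
proof (induction qs)
  case Nil
  interpret field "H eps w" by (rule H_field)
  show ?case by (simp add: A_const zero_H)
next
  case (Cons q qs)
  interpret field "H eps w" by (rule H_field)
  have q: "q \<in> A" and IH: "(\<lambda>n. eval_desc (map (\<lambda>q. q n) qs) (z n)) \<in> A"
    "eval (map cls qs) (cls z) = cls (\<lambda>n. eval_desc (map (\<lambda>q. q n) qs) (z n))"
    using Cons by auto
  have m: "(\<lambda>n. q n * z n ^ length qs) \<in> A" using A_mult[OF q A_pow[OF assms(2)]] .
  have "eval (map cls (q # qs)) (cls z) = cls q \<otimes>\<^bsub>H eps w\<^esub> cls z [^]\<^bsub>H eps w\<^esub> length qs \<oplus>\<^bsub>H eps w\<^esub> eval (map cls qs) (cls z)"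
    by simp
  also have "\<dots> = cls (\<lambda>n. q n * z n ^ length qs + eval_desc (map (\<lambda>q. q n) qs) (z n))"
    using q assms(2) IH m by (simp add: pow_cls mult_cls add_cls A_pow)
  finally show ?case using A_add[OF m IH(1)] by simp
qed

lemma A_list_bound:
  assumes "\<forall>q\<in>set qs. q \<in> A"
  shows "\<exists>M. \<forall>q\<in>set qs. \<forall>n. pabs q n \<le> M"
  using assms
proof (induction qs)
  case Nil then show ?case by simp
next
  case (Cons q qs)
  then obtain M where M: "\<forall>q\<in>set qs. \<forall>n. pabs q n \<le> M" by auto
  obtain M1 where M1: "\<And>n. pabs q n \<le> M1" using A_boundE Cons.prems by (metis list.set_intros(1))
  show ?case
    by (rule exI[of _ "max M M1"]) (use M M1 in \<open>auto simp: le_max_iff_disj\<close>)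
qed

lemma A_coordinatewise_root:
  assumes qs: "\<forall>q\<in>set qs. q \<in> A" "qs \<noteq> []" and c: "c \<in> A" "wnorm c \<noteq> 0"
  shows "\<exists>z\<in>A. eventually (\<lambda>n. eval_desc (c n # map (\<lambda>q. q n) qs) (z n) = 0) w"
proof -
  obtain M where M: "\<forall>q\<in>set qs. \<forall>n. pabs q n \<le> M" using A_list_bound qs(1) by blast
  have M0: "0 \<le> M" using M qs(2) pabs_nonneg by (metis last_in_set order_trans)
  have c_pos: "0 < wnorm c" using wnorm_pos c by blast
  define S where "S n \<longleftrightarrow> wnorm c / 2 < pabs c n" for n
  have "wnorm c / 2 < wnorm c" using c_pos by simp
  from wnorm_gt_eventually[OF c(1) this] have "eventually S w"
    by (rule eventually_mono) (simp add: S_def)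
  have cn: "c n \<noteq> 0" if "S n" for n
    using that c_pos by (auto simp: S_def pabs_def)
  define z where "z n = (if S n then SOME y. eval_desc (c n # map (\<lambda>q. q n) qs) y = 0 else 0)" for n
  have root: "eval_desc (c n # map (\<lambda>q. q n) qs) (z n) = 0" if "S n" for n
  proof -
    have "\<exists>y. eval_desc (c n # map (\<lambda>q. q n) qs) y = 0"
      by (rule eval_desc_has_root[OF cn[OF that]]) (use qs(2) in simp)
    from someI_ex[OF this] show ?thesis using that by (simp add: z_def)
  qed
  have "pabs z n \<le> 1 + real (length qs) * M / (wnorm c / 2)" for n
  proof (cases "S n")
    case True
    have "pabs z n \<le> 1 + sum_list (map (\<lambda>q. pabs q n) qs) / pabs c n"
      using eval_desc_root_powr_le[OF root[OF True] cn[OF True] eps_pos eps_le1]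
      by (simp add: pabs_def o_def)
    also have "sum_list (map (\<lambda>q. pabs q n) qs) \<le> real (length qs) * M"
      using sum_list_mono[of qs "\<lambda>q. pabs q n" "\<lambda>_. M"] M by (simp add: sum_list_triv)
    then have "sum_list (map (\<lambda>q. pabs q n) qs) / pabs c n \<le> real (length qs) * M / (wnorm c / 2)"
      using True c_pos M0 by (intro frac_le) (auto simp: S_def)
    finally show ?thesis by simp
  next
    case False
    then show ?thesis using M0 c_pos by (simp add: z_def pabs_def)
  qed
  then have "z \<in> A" by (rule A_intro)
  moreover have "eventually (\<lambda>n. eval_desc (c n # map (\<lambda>q. q n) qs) (z n) = 0) w"
    using \<open>eventually S w\<close> by (rule eventually_mono) (rule root)
  ultimately show ?thesis by blast
qed

lemma H_algebraically_closed: "algebraically_closed (H eps w)"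
proof -
  interpret field "H eps w" by (rule H_field)
  show ?thesis
  proof (rule algebraically_closedI)
    fix p assume p: "p \<in> carrier (poly_ring (H eps w))" and deg: "degree p > 1"
    then obtain U Us where pUs: "p = U # Us" by (cases p) auto
    have "polynomial\<^bsub>H eps w\<^esub> (carrier (H eps w)) p"
      using p by (simp add: univ_poly_carrier)
    then have U: "U \<in> carrier (H eps w)" "U \<noteq> \<zero>\<^bsub>H eps w\<^esub>" and Us: "set Us \<subseteq> carrier (H eps w)"
      by (auto simp: polynomial_def pUs)
    define c where "c = cls_rep U"
    define qs where "qs = map cls_rep Us"
    have c: "c \<in> A" "U = cls c" using cls_rep[OF U(1)] by (auto simp: c_def)
    have qs: "\<forall>q\<in>set qs. q \<in> A" "Us = map cls qs"
      using cls_rep Us by (auto simp: qs_def intro!: map_idI[symmetric])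
    have "qs \<noteq> []" using deg by (cases Us) (auto simp: pUs qs_def)
    moreover have "wnorm c \<noteq> 0" using U c cls_zero_iff by auto
    ultimately obtain z where z: "z \<in> A"
      and root: "eventually (\<lambda>n. eval_desc (c n # map (\<lambda>q. q n) qs) (z n) = 0) w"
      using A_coordinatewise_root qs(1) c(1) by blast
    have "p = map cls (c # qs)" using c qs by (simp add: pUs)
    then have "eval p (cls z) = cls (\<lambda>n. eval_desc (c n # map (\<lambda>q. q n) qs) (z n))"
      and "(\<lambda>n. eval_desc (c n # map (\<lambda>q. q n) qs) (z n)) \<in> A"
      using eval_cls[of "c # qs" z] qs(1) c(1) z by auto
    then have "eval p (cls z) = \<zero>\<^bsub>H eps w\<^esub>"
      using cls_zero_iff wnorm_eventually_zero[OF root] by simp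
    then show "\<exists>x\<in>carrier (H eps w). eval p x = \<zero>\<^bsub>H eps w\<^esub>"
      using z by (intro bexI[of _ "cls z"]) auto
  qed
qed

end

theorem mainTheorem6:
  fixes eps :: "nat \<Rightarrow> real" and w :: "nat filter"
  assumes eps_range: "\<forall>n. 0 < eps n \<and> eps n \<le> 1"
    and ultra: "is_ultrafilter w"
  shows "algebraically_closed (H eps w)
       \<and> metrized_field (H eps w) (Hnorm eps w)
       \<and> spherically_complete (H eps w) (Hnorm eps w)
       \<and> Hnorm eps w ` carrier (H eps w) = {0..}
       \<and> (\<forall>e. (eps \<longlongrightarrow> e) w \<and> 0 < e \<longrightarrow>
            (\<exists>\<phi>. \<phi> \<in> ring_iso (H eps w) C_ring \<and>
                 (\<forall>U\<in>carrier (H eps w). Hnorm eps w U = cmod (\<phi> U) powr e))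
            \<and> \<not> non_archimedean (H eps w) (Hnorm eps w))
       \<and> ((eps \<longlongrightarrow> 0) w \<longrightarrow> non_archimedean (H eps w) (Hnorm eps w))"
proof -
  interpret ultra_Aeps eps w
    using eps_range ultra by unfold_locales auto
  have "(\<exists>\<phi>. \<phi> \<in> ring_iso (H eps w) C_ring \<and>
           (\<forall>U\<in>carrier (H eps w). Hnorm eps w U = cmod (\<phi> U) powr e))
        \<and> \<not> non_archimedean (H eps w) (Hnorm eps w)"
    if "(eps \<longlongrightarrow> e) w" "0 < e" for e
    using Hlim_ring_iso[OF that] Hnorm_Hlim[OF that] H_not_non_archimedean[OF that] by blast
  then show ?thesis
    using H_algebraically_closed H_metrized_field H_spherically_complete Hnorm_image H_non_archimedean by blast
qed
end
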